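(* Assume $\mathcal Q$ is locally dominated. Then every anytime-valid $p$-value for $\mathcal Q$ is dominated by a $\mathcal Q$-admissible anytime-valid $p$-value for $\mathcal Q$ (i.e. for every $\mathcal Q$-valid $(\mathfrak p_t)$ there is a $\mathcal Q$-admissible $(\mathfrak p'_t)$ with $\mathtt Q(\mathfrak p'_t\le\mathfrak p_t)=1$ for all $t$ and $\mathtt Q\in\mathcal Q$). Likewise every anytime-valid $e$-value for $\mathcal Q$ is dominated (from above) by a $\mathcal Q$-admissible one, and every $(\mathcal Q,\alpha)$-sequential test is dominated (from above) by a $\mathcal Q$-admissible $(\mathcal Q,\alpha)$-sequential test.
   Context: Setup: observations $(X_t)_{t\in\mathbb N}$, an independent $[0,1]$-uniform $U$, filtration $\mathcal F_0=\sigma(U)$, $\mathcal F_t=\sigma(U,X_1,\dots,X_t)$, $\mathcal F_\infty=\sigma(\bigcup_t\mathcal F_t)$; probability measures are on $\mathcal F_\infty$; stopping times may be infinite. $\mathcal Q$ is locally dominated if some probability $\mathtt R$ satisfies $\mathtt Q|_{\mathcal F_t}\ll\mathtt R|_{\mathcal F_t}$ for all $t$ and $\mathtt Q\in\mathcal Q$. - $\mathcal Q$-valid $p$-value: adapted $[0,1]$-valued $(\mathfrak p_t)_{t\in\mathbb N_0}$ with $\mathtt Q(\mathfrak p_\tau\le\alpha)\le\alpha$ for all stopping times $\tau$, $\mathtt Q\in\mathcal Q$, $\alpha\in[0,1]$ ($\mathfrak p_\infty:=\liminf_t\mathfrak p_t$). - $\mathcal Q$-safe $e$-value: adapted $[0,\infty]$-valued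 $(\mathfrak e_t)$ with $\mathtt E_{\mathtt Q}[\mathfrak e_\tau]\le1$ for all stopping times $\tau$, $\mathtt Q\in\mathcal Q$ ($\mathfrak e_\infty:=\limsup_t\mathfrak e_t$). - $(\mathcal Q,\alpha)$-sequential test: adapted $\{0,1\}$-valued $(\psi_t)$ with $\mathtt Q(\psi_\tau=1)\le\alpha$ for all stopping times $\tau$, $\mathtt Q\in\mathcal Q$ ($\psi_\infty:=\limsup_t\psi_t$). - Admissibility: a $\mathcal Q$-valid $(\mathfrak p_t)$ is $\mathcal Q$-inadmissible if there is a $\mathcal Q$-valid $(\mathfrak p'_t)$ with $\mathtt Q(\mathfrak p'_t\le\mathfrak p_t)=1$ for all $t\in\mathbb N_0$, $\mathtt Q\in\mathcal Q$, and $\mathtt Q(\mathfrak p'_t<\mathfrak p_t)>0$ for some $t$ and some $\mathtt Q\in\mathcal Q$; $\mathcal Q$-admissible otherwise. Analogously for $e$-values and sequential tests with reversed inequalities. *)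

theory Defs
  imports "HOL-Probability.Probability"
begin

text \<open>Sample space Omega (a carrier set), observations X 1, X 2, ... with values in the
measurable space S (X 0 is unused), and the randomisation variable U (real valued).\<close>

definition Fil :: "'w set \<Rightarrow> 'x measure \<Rightarrow> ('w \<Rightarrow> real) \<Rightarrow> (nat \<Rightarrow> 'w \<Rightarrow> 'x) \<Rightarrow> nat \<Rightarrow> 'w measure" where
  "Fil \<Omega> S U X t = sigma \<Omega>
     ({U -` B \<inter> \<Omega> | B. B \<in> sets borel} \<union>
      (\<Union>s\<in>{1..t}. {X s -` A \<inter> \<Omega> | A. A \<in> sets S}))"

definition Finf :: "'w set \<Rightarrow> 'x measure \<Rightarrow> ('w \<Rightarrow> real) \<Rightarrow> (nat \<Rightarrow> 'w \<Rightarrow> 'x) \<Rightarrow> 'w measure" where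
  "Finf \<Omega> S U X = sigma \<Omega> (\<Union>t. sets (Fil \<Omega> S U X t))"

definition is_stopping_time :: "(nat \<Rightarrow> 'w measure) \<Rightarrow> ('w \<Rightarrow> enat) \<Rightarrow> bool" where
  "is_stopping_time F \<tau> \<longleftrightarrow> (\<forall>t::nat. {w \<in> space (F t). \<tau> w \<le> enat t} \<in> sets (F t))"

definition stopped_p :: "(nat \<Rightarrow> 'w \<Rightarrow> real) \<Rightarrow> ('w \<Rightarrow> enat) \<Rightarrow> 'w \<Rightarrow> real" where
  "stopped_p p \<tau> w = (case \<tau> w of enat t \<Rightarrow> p t w
                         | \<infinity> \<Rightarrow> real_of_ereal (liminf (\<lambda>t. ereal (p t w))))"

definition stopped_e :: "(nat \<Rightarrow> 'w \<Rightarrow> ennreal) \<Rightarrow> ('w \<Rightarrow> enat) \<Rightarrow> 'w \<Rightarrow> ennreal" where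
  "stopped_e e \<tau> w = (case \<tau> w of enat t \<Rightarrow> e t w | \<infinity> \<Rightarrow> limsup (\<lambda>t. e t w))"

definition stopped_test :: "(nat \<Rightarrow> 'w \<Rightarrow> bool) \<Rightarrow> ('w \<Rightarrow> enat) \<Rightarrow> 'w \<Rightarrow> bool" where
  "stopped_test \<psi> \<tau> w = (case \<tau> w of enat t \<Rightarrow> \<psi> t w | \<infinity> \<Rightarrow> limsup (\<lambda>t. \<psi> t w))"

definition valid_p :: "(nat \<Rightarrow> 'w measure) \<Rightarrow> 'w measure set \<Rightarrow> (nat \<Rightarrow> 'w \<Rightarrow> real) \<Rightarrow> bool" where
  "valid_p F \<Q> p \<longleftrightarrow>
     (\<forall>t. p t \<in> borel_measurable (F t)) \<and>
     (\<forall>t. \<forall>w\<in>space (F t). 0 \<le> p t w \<and> p t w \<le> 1) \<and>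
     (\<forall>\<tau> Q \<alpha>. is_stopping_time F \<tau> \<longrightarrow> Q \<in> \<Q> \<longrightarrow> 0 \<le> \<alpha> \<longrightarrow> \<alpha> \<le> 1 \<longrightarrow>
        measure Q {w \<in> space Q. stopped_p p \<tau> w \<le> \<alpha>} \<le> \<alpha>)"

definition dominates_p :: "'w measure set \<Rightarrow> (nat \<Rightarrow> 'w \<Rightarrow> real) \<Rightarrow> (nat \<Rightarrow> 'w \<Rightarrow> real) \<Rightarrow> bool" where
  "dominates_p \<Q> p' p \<longleftrightarrow> (\<forall>Q\<in>\<Q>. \<forall>t. AE w in Q. p' t w \<le> p t w)"

definition admissible_p :: "(nat \<Rightarrow> 'w measure) \<Rightarrow> 'w measure set \<Rightarrow> (nat \<Rightarrow> 'w \<Rightarrow> real) \<Rightarrow> bool" where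
  "admissible_p F \<Q> p \<longleftrightarrow> valid_p F \<Q> p \<and>
     \<not> (\<exists>p'. valid_p F \<Q> p' \<and> dominates_p \<Q> p' p \<and>
            (\<exists>t. \<exists>Q\<in>\<Q>. measure Q {w \<in> space Q. p' t w < p t w} > 0))"

definition safe_e :: "(nat \<Rightarrow> 'w measure) \<Rightarrow> 'w measure set \<Rightarrow> (nat \<Rightarrow> 'w \<Rightarrow> ennreal) \<Rightarrow> bool" where
  "safe_e F \<Q> e \<longleftrightarrow>
     (\<forall>t. e t \<in> borel_measurable (F t)) \<and>
     (\<forall>\<tau> Q. is_stopping_time F \<tau> \<longrightarrow> Q \<in> \<Q> \<longrightarrow> (\<integral>\<^sup>+ w. stopped_e e \<tau> w \<partial>Q) \<le> 1)"

definition dominates_e :: "'w measure set \<Rightarrow> (nat \<Rightarrow> 'w \<Rightarrow> ennreal) \<Rightarrow> (nat \<Rightarrow> 'w \<Rightarrow> ennreal) \<Rightarrow> bool" where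
  "dominates_e \<Q> e' e \<longleftrightarrow> (\<forall>Q\<in>\<Q>. \<forall>t. AE w in Q. e' t w \<ge> e t w)"

definition admissible_e :: "(nat \<Rightarrow> 'w measure) \<Rightarrow> 'w measure set \<Rightarrow> (nat \<Rightarrow> 'w \<Rightarrow> ennreal) \<Rightarrow> bool" where
  "admissible_e F \<Q> e \<longleftrightarrow> safe_e F \<Q> e \<and>
     \<not> (\<exists>e'. safe_e F \<Q> e' \<and> dominates_e \<Q> e' e \<and>
            (\<exists>t. \<exists>Q\<in>\<Q>. measure Q {w \<in> space Q. e' t w > e t w} > 0))"

subsection \<open>Sequential tests (value True = reject = 1)\<close>

definition seq_test :: "(nat \<Rightarrow> 'w measure) \<Rightarrow> 'w measure set \<Rightarrow> real \<Rightarrow> (nat \<Rightarrow> 'w \<Rightarrow> bool) \<Rightarrow> bool" where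
  "seq_test F \<Q> \<alpha> \<psi> \<longleftrightarrow>
     (\<forall>t. \<psi> t \<in> F t \<rightarrow>\<^sub>M count_space UNIV) \<and>
     (\<forall>\<tau> Q. is_stopping_time F \<tau> \<longrightarrow> Q \<in> \<Q> \<longrightarrow>
        measure Q {w \<in> space Q. stopped_test \<psi> \<tau> w} \<le> \<alpha>)"

definition dominates_test :: "'w measure set \<Rightarrow> (nat \<Rightarrow> 'w \<Rightarrow> bool) \<Rightarrow> (nat \<Rightarrow> 'w \<Rightarrow> bool) \<Rightarrow> bool" where
  "dominates_test \<Q> \<psi>' \<psi> \<longleftrightarrow> (\<forall>Q\<in>\<Q>. \<forall>t. AE w in Q. \<psi>' t w \<ge> \<psi> t w)"

definition admissible_test :: "(nat \<Rightarrow> 'w measure) \<Rightarrow> 'w measure set \<Rightarrow> real \<Rightarrow> (nat \<Rightarrow> 'w \<Rightarrow> bool) \<Rightarrow> bool" where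
  "admissible_test F \<Q> \<alpha> \<psi> \<longleftrightarrow> seq_test F \<Q> \<alpha> \<psi> \<and>
     \<not> (\<exists>\<psi>'. seq_test F \<Q> \<alpha> \<psi>' \<and> dominates_test \<Q> \<psi>' \<psi> \<and>
            (\<exists>t. \<exists>Q\<in>\<Q>. measure Q {w \<in> space Q. \<psi>' t w > \<psi> t w} > 0))"

definition locally_dominated :: "(nat \<Rightarrow> 'w measure) \<Rightarrow> 'w measure \<Rightarrow> 'w measure set \<Rightarrow> bool" where
  "locally_dominated F Finfty \<Q> \<longleftrightarrow>
     (\<exists>R. prob_space R \<and> sets R = sets Finfty \<and>
        (\<forall>t. \<forall>Q\<in>\<Q>. \<forall>A\<in>sets (F t). emeasure R A = 0 \<longrightarrow> emeasure Q A = 0))"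

end

theory Submission
  imports Defs
begin

text \<open>
  Fix a probability R that dominates every Q \<in> \<Q> on each \<open>F t\<close>, and measure a p-value q
  at time t by \<open>\<Phi> t q = \<integral> q t dR\<close> (for an e-value e by \<open>\<integral> 1 / (1 + e t) dR\<close>, for a test
  \<psi> by \<open>R {\<psi> t = 0}\<close>). Validity is preserved by monotone limits: for p-values and tests
  because a first hitting time turns a crossing of the limit into a crossing of one term; for
  e-values by monotone convergence at finite stopping times, which suffice because an
  \<open>F\<^sub>\<infinity>\<close>-measurable truncation of \<open>e\<^sub>\<tau>\<close> can be approximated in \<open>L\<^sup>1\<close> by an
  \<open>F N\<close>-measurable function and then nearly attained by stopping after N. Hence a countable
  descent that revisits every t infinitely often reaches a valid q below the given one at which
  every \<open>\<Phi> t\<close> is minimal among valid processes below q. Such a q is admissible: an improvement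
  on a Q-nonnull \<open>F t\<close>-event, combined with q by a pointwise min (max, or), stays valid and
  strictly lowers \<open>\<Phi> t\<close>, because that event is R-nonnull.
\<close>

lemma limsup_bool_iff: "limsup (f :: nat \<Rightarrow> bool) \<longleftrightarrow> (\<forall>N. \<exists>n\<ge>N. f n)"
  unfolding limsup_INF_SUP by (auto simp: INF_bool_eq SUP_bool_eq)

lemma nn_integral_abs_le_add:
  fixes u f g :: "'a \<Rightarrow> real"
  assumes "f \<in> borel_measurable M" "g \<in> borel_measurable M" "\<And>w. \<bar>u w\<bar> \<le> \<bar>f w\<bar> + \<bar>g w\<bar>"
  shows "(\<integral>\<^sup>+ w. ennreal \<bar>u w\<bar> \<partial>M) \<le> (\<integral>\<^sup>+ w. ennreal \<bar>f w\<bar> \<partial>M) + (\<integral>\<^sup>+ w. ennreal \<bar>g w\<bar> \<partial>M)"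
proof -
  have "(\<integral>\<^sup>+ w. ennreal \<bar>u w\<bar> \<partial>M) \<le> (\<integral>\<^sup>+ w. ennreal \<bar>f w\<bar> + ennreal \<bar>g w\<bar> \<partial>M)"
    using assms(3) by (intro nn_integral_mono) (simp add: ennreal_plus[symmetric] del: ennreal_plus)
  also have "\<dots> = (\<integral>\<^sup>+ w. ennreal \<bar>f w\<bar> \<partial>M) + (\<integral>\<^sup>+ w. ennreal \<bar>g w\<bar> \<partial>M)"
    using assms(1,2) by (intro nn_integral_add) auto
  finally show ?thesis .
qed

lemma min_le_threshold_plus_deviation:
  fixes v z C \<delta> :: real and x :: ennreal
  assumes v: "ennreal v = min x (ennreal C)" "0 \<le> v" "v \<le> C" and "0 \<le> C" "0 < \<delta>"
  shows "min x (ennreal C) \<le> (if ennreal (z - 2 * \<delta>) < x then ennreal (z - 2 * \<delta>) else 0)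
    + ennreal (2 * \<delta>) + ennreal (1 + C / (2 * \<delta>)) * ennreal \<bar>v - z\<bar>"
proof -
  define k where "k = 1 + C / (2 * \<delta>)"
  have "1 \<le> k" using assms by (simp add: k_def)
  then have v_le: "v \<le> z + k * \<bar>v - z\<bar>"
    using mult_right_mono[OF \<open>1 \<le> k\<close> abs_ge_zero, of "v - z"] abs_ge_self[of "v - z"] by simp
  have "ennreal v \<le> (if ennreal (z - 2 * \<delta>) < x then ennreal (z - 2 * \<delta>) else 0)
      + ennreal (2 * \<delta> + k * \<bar>v - z\<bar>)"
  proof (cases "ennreal (z - 2 * \<delta>) < x")
    case True
    have "ennreal v \<le> ennreal (max 0 (z - 2 * \<delta>) + (2 * \<delta> + k * \<bar>v - z\<bar>))"
      using v_le max.cobounded2[of "z - 2 * \<delta>" 0] by (intro ennreal_leI) linarith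
    with True show ?thesis
      using \<open>0 < \<delta>\<close> \<open>1 \<le> k\<close> by (simp add: ennreal_plus ennreal_max_0)
  next
    case False
    have "v \<le> 2 * \<delta> + k * \<bar>v - z\<bar>"
    proof (cases "z \<le> 2 * \<delta>")
      case True
      then show ?thesis using v_le by linarith
    next
      \<comment> \<open>Here the truncated value lies at least 2\<delta> below z, so C is paid for by the deviation.\<close>
      case False
      have "ennreal v \<le> ennreal (z - 2 * \<delta>)"
        using \<open>\<not> ennreal (z - 2 * \<delta>) < x\<close> unfolding v by (simp add: min_le_iff_disj not_less)
      then have "2 * \<delta> \<le> \<bar>v - z\<bar>" using False by (simp add: ennreal_le_iff)
      then have "C / (2 * \<delta>) * (2 * \<delta>) \<le> C / (2 * \<delta>) * \<bar>v - z\<bar>"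
        using \<open>0 \<le> C\<close> \<open>0 < \<delta>\<close> by (intro mult_left_mono) auto
      then have "v \<le> C / (2 * \<delta>) * \<bar>v - z\<bar>" using v(3) \<open>0 < \<delta>\<close> by simp
      then show ?thesis using \<open>0 < \<delta>\<close> unfolding k_def by (simp add: distrib_right)
    qed
    with False show ?thesis by (simp add: ennreal_leI)
  qed
  then show ?thesis
    using \<open>0 < \<delta>\<close> \<open>1 \<le> k\<close> unfolding v(1) k_def[symmetric]
    by (simp add: ennreal_plus ennreal_mult add.assoc)
qed

lemma less_limsup_imp_ex_ge:
  fixes f :: "nat \<Rightarrow> 'b::complete_linorder"
  assumes "c < limsup f"
  shows "\<exists>n\<ge>N. c < f n"
proof -
  have "c < (SUP n\<in>{N..}. f n)"
    using assms unfolding limsup_INF_SUP by (rule less_INF_D) simp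
  then show ?thesis by (auto simp: less_SUP_iff)
qed

lemma SUP_min_of_nat_ennreal: "(SUP n. min x (of_nat n)) = (x::ennreal)"
proof -
  have "(SUP n. min x (of_nat n)) = inf x (SUP n. of_nat n)"
    unfolding inf_SUP by (simp add: inf_min)
  also have "\<dots> = x" by (simp add: ennreal_SUP_of_nat_eq_top)
  finally show ?thesis .
qed

lemma (in finite_measure) measure_UN_incseq_le:
  assumes "range B \<subseteq> sets M" "incseq B" "\<And>n. measure M (B n) \<le> c"
  shows "measure M (\<Union>n. B n) \<le> c"
  using LIMSEQ_le_const2[OF finite_Lim_measure_incseq[OF assms(1,2)]] assms(3) by blast

lemma stopped_p_less_imp_ex_less:
  fixes q :: "nat \<Rightarrow> 'a \<Rightarrow> real"
  assumes le_1: "\<And>t. q t w \<le> 1" and less: "stopped_p q \<tau> w < \<beta>"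
  shows "\<exists>t. enat t \<le> \<tau> w \<and> q t w < \<beta>"
proof (cases "\<tau> w")
  case (enat t)
  then show ?thesis using less by (auto simp: stopped_p_def)
next
  case infinity
  show ?thesis
  proof (rule ccontr)
    assume "\<not> ?thesis"
    then have "ereal \<beta> \<le> liminf (\<lambda>t. ereal (q t w))"
      using infinity by (intro Liminf_bounded) (auto simp: not_less)
    moreover have "liminf (\<lambda>t. ereal (q t w)) \<le> limsup (\<lambda>t. ereal (q t w))"
      by (rule Liminf_le_Limsup) simp
    moreover have "limsup (\<lambda>t. ereal (q t w)) \<le> ereal 1"
      using le_1 by (intro Limsup_bounded) auto
    ultimately have "\<beta> \<le> real_of_ereal (liminf (\<lambda>t. ereal (q t w)))"
      by (cases "liminf (\<lambda>t. ereal (q t w))") auto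
    then show False using less infinity by (simp add: stopped_p_def)
  qed
qed

lemma stopped_p_INF_less_imp_ex_less:
  fixes s :: "nat \<Rightarrow> nat \<Rightarrow> 'a \<Rightarrow> real"
  assumes range: "\<And>n t. 0 \<le> s n t w \<and> s n t w \<le> 1"
    and less: "stopped_p (\<lambda>t w. INF n. s n t w) \<tau> w < \<beta>"
  shows "\<exists>n t. enat t \<le> \<tau> w \<and> s n t w < \<beta>"
proof -
  have bdd: "bdd_below (range (\<lambda>n. s n t w))" for t
    using range by (auto intro!: bdd_belowI[of _ 0])
  have "(INF n. s n t w) \<le> 1" for t
    using cINF_lower[OF bdd UNIV_I, of t 0] range[of 0 t] by linarith
  then obtain t where "enat t \<le> \<tau> w" "(INF n. s n t w) < \<beta>"
    using stopped_p_less_imp_ex_less[OF _ less] by blast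
  then show ?thesis using cINF_less_iff[OF _ bdd] by auto
qed

definition recip_one_plus :: "ennreal \<Rightarrow> real" where
  "recip_one_plus x = (if x = \<top> then 0 else 1 / (1 + enn2real x))"

lemma borel_measurable_recip_one_plus[measurable]:
  assumes [measurable]: "f \<in> borel_measurable M"
  shows "(\<lambda>w. recip_one_plus (f w)) \<in> borel_measurable M"
proof -
  have "{\<top>::ennreal} \<in> sets borel" by (intro borel_closed) simp
  then have [measurable]: "{w \<in> space M. f w = \<top>} \<in> sets M"
    using pred_eq_const1[OF assms, of \<top>] by (simp add: pred_def)
  show ?thesis unfolding recip_one_plus_def by measurable
qed

lemma recip_one_plus_bounds: "0 \<le> recip_one_plus x" "recip_one_plus x \<le> 1"
  using enn2real_nonneg[of x] unfolding recip_one_plus_def by (auto simp: divide_le_eq)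

lemma recip_one_plus_antimono:
  assumes "x \<le> y"
  shows "recip_one_plus y \<le> recip_one_plus x"
proof (cases "y = \<top>")
  case False
  then have "x \<noteq> \<top>" "enn2real x \<le> enn2real y"
    using assms by (auto simp: top_unique enn2real_mono less_top)
  with False show ?thesis
    using add_pos_nonneg[OF zero_less_one enn2real_nonneg[of x]]
    by (simp add: recip_one_plus_def frac_le)
qed (simp add: recip_one_plus_def)

lemma recip_one_plus_strict_antimono:
  assumes "x < y"
  shows "recip_one_plus y < recip_one_plus x"
proof (cases "y = \<top>")
  case True
  then show ?thesis
    using assms add_pos_nonneg[OF zero_less_one enn2real_nonneg[of x]]
    by (auto simp: recip_one_plus_def)
next
  case False
  then have "x \<noteq> \<top>" "enn2real x < enn2real y"
    using assms by (auto simp: top_unique enn2real_less_iff less_top)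
  with False show ?thesis
    using add_pos_nonneg[OF zero_less_one enn2real_nonneg[of x]]
    by (simp add: recip_one_plus_def frac_less2)
qed

section \<open>Minimal elements by countable descent\<close>

lemma exists_minimal_below_by_descent:
  fixes le :: "'a \<Rightarrow> 'a \<Rightarrow> bool" and \<Phi> :: "nat \<Rightarrow> 'a \<Rightarrow> real"
  assumes trans: "\<And>x y z. le x y \<Longrightarrow> le y z \<Longrightarrow> le x z"
    and refl: "\<And>x. x \<in> V \<Longrightarrow> le x x"
    and mono: "\<And>x y t. x \<in> V \<Longrightarrow> y \<in> V \<Longrightarrow> le x y \<Longrightarrow> \<Phi> t x \<le> \<Phi> t y"
    and nonneg: "\<And>x t. x \<in> V \<Longrightarrow> 0 \<le> \<Phi> t x"
    and lim: "\<And>s. (\<And>n. s n \<in> V) \<Longrightarrow> (\<And>n. le (s (Suc n)) (s n)) \<Longrightarrow> \<exists>l\<in>V. \<forall>n. le l (s n)"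
    and x0: "x0 \<in> V"
  shows "\<exists>x\<in>V. le x x0 \<and> (\<forall>y\<in>V. le y x \<longrightarrow> (\<forall>t. \<Phi> t x \<le> \<Phi> t y))"
proof -
  \<comment> \<open>Step n lowers, up to 1/(n+1), the functional with index fst (prod_decode n); every
      index is visited infinitely often.\<close>
  define tt where "tt n = fst (prod_decode n)" for n
  define I where "I n x = Inf (\<Phi> (tt n) ` {y\<in>V. le y x})" for n x
  have bdd: "bdd_below (\<Phi> (tt n) ` {y\<in>V. le y x})" for n x
    using nonneg by (auto intro!: bdd_belowI[of _ 0])
  have step: "\<exists>y. y \<in> V \<and> le y x \<and> \<Phi> (tt n) y < I n x + 1 / real (Suc n)" if "x \<in> V" for n x
  proof -
    have "\<Phi> (tt n) ` {y\<in>V. le y x} \<noteq> {}" using that refl by auto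
    moreover have "I n x < I n x + 1 / real (Suc n)" by simp
    ultimately show ?thesis using cInf_less_iff[OF _ bdd] unfolding I_def by blast
  qed
  define nx where
    "nx n x = (SOME y. y \<in> V \<and> le y x \<and> \<Phi> (tt n) y < I n x + 1 / real (Suc n))" for n x
  have nx: "nx n x \<in> V \<and> le (nx n x) x \<and> \<Phi> (tt n) (nx n x) < I n x + 1 / real (Suc n)"
    if "x \<in> V" for n x
    unfolding nx_def using someI_ex[OF step[OF that]] .
  define s where "s = rec_nat x0 nx"
  have s0: "s 0 = x0" and sS: "s (Suc n) = nx n (s n)" for n unfolding s_def by simp_all
  have sV: "s n \<in> V" for n by (induction n) (auto simp: s0 sS x0 nx)
  have sle: "le (s (Suc n)) (s n)" for n using nx[OF sV[of n]] sS by simp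
  obtain l where l: "l \<in> V" "\<And>n. le l (s n)" using lim[of s, OF sV sle] by blast
  have "\<Phi> t l \<le> \<Phi> t y" if y: "y \<in> V" "le y l" for y t
  proof (rule field_le_epsilon)
    fix e :: real assume "0 < e"
    then obtain k where k: "inverse (real (Suc k)) < e" using reals_Archimedean by blast
    define n where "n = prod_encode (t, k)"
    have tn: "tt n = t" unfolding tt_def n_def by simp
    have "1 / real (Suc n) \<le> inverse (real (Suc k))"
      using le_prod_encode_2[of k t] unfolding n_def by (simp add: field_simps)
    moreover have "I n (s n) \<le> \<Phi> t y"
      unfolding I_def using y trans[OF y(2) l(2)[of n]] tn by (intro cInf_lower bdd) auto
    moreover have "\<Phi> t (s (Suc n)) < I n (s n) + 1 / real (Suc n)"
      using nx[OF sV[of n], of n] sS[of n] tn by simp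
    moreover have "\<Phi> t l \<le> \<Phi> t (s (Suc n))" using mono[OF l(1) sV l(2)] .
    ultimately show "\<Phi> t l \<le> \<Phi> t y + e" using k by linarith
  qed
  then show ?thesis using l(1) l(2)[of 0] s0 by auto
qed

lemma exists_unimprovable_below:
  fixes le :: "'a \<Rightarrow> 'a \<Rightarrow> bool" and \<Phi> :: "nat \<Rightarrow> 'a \<Rightarrow> real"
  assumes trans: "\<And>x y z. le x y \<Longrightarrow> le y z \<Longrightarrow> le x z"
    and refl: "\<And>x. x \<in> V \<Longrightarrow> le x x"
    and mono: "\<And>x y t. x \<in> V \<Longrightarrow> y \<in> V \<Longrightarrow> le x y \<Longrightarrow> \<Phi> t x \<le> \<Phi> t y"
    and nonneg: "\<And>x t. x \<in> V \<Longrightarrow> 0 \<le> \<Phi> t x"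
    and lim: "\<And>s. (\<And>n. s n \<in> V) \<Longrightarrow> (\<And>n. le (s (Suc n)) (s n)) \<Longrightarrow> \<exists>l\<in>V. \<forall>n. le l (s n)"
    and improve: "\<And>x y. x \<in> V \<Longrightarrow> y \<in> V \<Longrightarrow> better y x \<Longrightarrow> \<exists>z\<in>V. le z x \<and> (\<exists>t. \<Phi> t z < \<Phi> t x)"
    and x0: "x0 \<in> V"
  shows "\<exists>x\<in>V. le x x0 \<and> \<not> (\<exists>y\<in>V. better y x)"
proof -
  have "\<exists>x\<in>V. le x x0 \<and> (\<forall>y\<in>V. le y x \<longrightarrow> (\<forall>t. \<Phi> t x \<le> \<Phi> t y))"
    by (rule exists_minimal_below_by_descent[of le V \<Phi>]) (fact trans refl mono nonneg lim x0)+
  then obtain x where x: "x \<in> V" "le x x0"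
    and min: "\<And>y t. y \<in> V \<Longrightarrow> le y x \<Longrightarrow> \<Phi> t x \<le> \<Phi> t y"
    by blast
  have "\<not> better y x" if y: "y \<in> V" for y
  proof
    assume "better y x"
    then obtain z t where "z \<in> V" "le z x" "\<Phi> t z < \<Phi> t x"
      using improve[OF x(1) y] by blast
    then show False using min[of z t] by simp
  qed
  then show ?thesis using x by blast
qed

definition process_le :: "'a set \<Rightarrow> (nat \<Rightarrow> 'a \<Rightarrow> 'b::order) \<Rightarrow> (nat \<Rightarrow> 'a \<Rightarrow> 'b) \<Rightarrow> bool" where
  "process_le \<Omega> q q' \<longleftrightarrow> (\<forall>t. \<forall>w\<in>\<Omega>. q t w \<le> q' t w)"

lemma process_le_refl: "process_le \<Omega> q q"
  unfolding process_le_def by simp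

lemma process_le_trans: "process_le \<Omega> q q' \<Longrightarrow> process_le \<Omega> q' q'' \<Longrightarrow> process_le \<Omega> q q''"
  unfolding process_le_def by (meson order_trans)

section \<open>Stopping times of a discrete-time filtration\<close>

locale nat_filtration = filtration \<Omega> F for \<Omega> :: "'a set" and F :: "nat \<Rightarrow> 'a measure"
begin

lemma stopping_time_le_sets:
  "is_stopping_time F \<tau> \<Longrightarrow> {w\<in>\<Omega>. \<tau> w \<le> enat t} \<in> sets (F t)"
  unfolding is_stopping_time_def using space_F by auto

lemma stopping_time_ge_sets:
  assumes "is_stopping_time F \<tau>"
  shows "{w\<in>\<Omega>. enat t \<le> \<tau> w} \<in> sets (F t)"
proof (cases t)
  case 0
  then show ?thesis using sets.top[of "F 0"] by (simp add: space_F zero_enat_def[symmetric])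
next
  case (Suc s)
  then have "{w\<in>\<Omega>. enat t \<le> \<tau> w} = space (F t) - {w\<in>\<Omega>. \<tau> w \<le> enat s}"
    by (auto simp: space_F Suc_ile_eq not_le)
  moreover have "{w\<in>\<Omega>. \<tau> w \<le> enat s} \<in> sets (F t)"
    using stopping_time_le_sets[OF assms, of s] sets_F_mono[of s t] Suc by auto
  ultimately show ?thesis by auto
qed

lemma stopping_time_eq_sets:
  assumes "is_stopping_time F \<tau>"
  shows "{w\<in>\<Omega>. \<tau> w = enat t} \<in> sets (F t)"
proof -
  have "{w\<in>\<Omega>. \<tau> w = enat t} = {w\<in>\<Omega>. \<tau> w \<le> enat t} \<inter> {w\<in>\<Omega>. enat t \<le> \<tau> w}" by auto
  then show ?thesis
    using stopping_time_le_sets[OF assms] stopping_time_ge_sets[OF assms] by auto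
qed

lemma stopping_time_min_const:
  assumes "is_stopping_time F \<tau>"
  shows "is_stopping_time F (\<lambda>w. min (\<tau> w) (enat K))"
  unfolding is_stopping_time_def
proof
  fix t
  show "{w \<in> space (F t). min (\<tau> w) (enat K) \<le> enat t} \<in> sets (F t)"
  proof (cases "K \<le> t")
    case True
    then show ?thesis by (auto simp: min_le_iff_disj)
  next
    case False
    then have "{w \<in> space (F t). min (\<tau> w) (enat K) \<le> enat t} = {w\<in>\<Omega>. \<tau> w \<le> enat t}"
      by (auto simp: space_F min_le_iff_disj)
    then show ?thesis using stopping_time_le_sets[OF assms] by simp
  qed
qed

lemma space_eq_if_sets_eq_sigma_F:
  assumes "sets M = sigma_sets \<Omega> (\<Union>t. sets (F t))"
  shows "space M = \<Omega>"
proof -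
  have "(\<Union>t. sets (F t)) \<subseteq> Pow \<Omega>"
    using sets.space_closed[of "F _"] by (auto simp: space_F)
  then have "sets M = sets (sigma \<Omega> (\<Union>t. sets (F t)))"
    using assms by (simp add: sets_measure_of)
  then have "space M = space (sigma \<Omega> (\<Union>t. sets (F t)))" by (rule sets_eq_imp_space_eq)
  then show ?thesis by (simp add: space_measure_of_conv)
qed

definition first_hit :: "(nat \<Rightarrow> 'a set) \<Rightarrow> ('a \<Rightarrow> enat) \<Rightarrow> 'a \<Rightarrow> enat" where
  "first_hit H \<tau> w =
     (if \<exists>t. enat t \<le> \<tau> w \<and> w \<in> H t then enat (LEAST t. enat t \<le> \<tau> w \<and> w \<in> H t) else \<infinity>)"

lemma first_hitI:
  assumes "enat t \<le> \<tau> w" "w \<in> H t"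
  shows "\<exists>m\<le>t. first_hit H \<tau> w = enat m \<and> w \<in> H m"
proof -
  let ?P = "\<lambda>t. enat t \<le> \<tau> w \<and> w \<in> H t"
  have "?P t" using assms by auto
  then show ?thesis unfolding first_hit_def using LeastI[of ?P t] Least_le[of ?P t] by auto
qed

lemma first_hitD:
  assumes "first_hit H \<tau> w = enat m"
  shows "enat m \<le> \<tau> w \<and> w \<in> H m"
proof -
  let ?P = "\<lambda>t. enat t \<le> \<tau> w \<and> w \<in> H t"
  have ex: "\<exists>t. ?P t" using assms unfolding first_hit_def by (auto split: if_splits)
  then have "m = (LEAST t. ?P t)" using assms unfolding first_hit_def by auto
  then show ?thesis using LeastI_ex[OF ex] by auto
qed

lemma stopping_time_first_hit:
  assumes H: "\<And>t. H t \<in> sets (F t)" and \<tau>: "is_stopping_time F \<tau>"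
  shows "is_stopping_time F (first_hit H \<tau>)"
  unfolding is_stopping_time_def
proof
  fix t
  have "{w \<in> space (F t). first_hit H \<tau> w \<le> enat t} = (\<Union>s\<le>t. {w\<in>\<Omega>. enat s \<le> \<tau> w} \<inter> H s)"
  proof (intro equalityI subsetI)
    fix w assume w: "w \<in> {w \<in> space (F t). first_hit H \<tau> w \<le> enat t}"
    then obtain m where "first_hit H \<tau> w = enat m" "m \<le> t"
      by (cases "first_hit H \<tau> w") auto
    with first_hitD[of H \<tau> w m] w show "w \<in> (\<Union>s\<le>t. {w\<in>\<Omega>. enat s \<le> \<tau> w} \<inter> H s)"
      by (auto simp: space_F)
  next
    fix w assume "w \<in> (\<Union>s\<le>t. {w\<in>\<Omega>. enat s \<le> \<tau> w} \<inter> H s)"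
    then obtain s where "s \<le> t" "w \<in> \<Omega>" "enat s \<le> \<tau> w" "w \<in> H s" by auto
    with first_hitI[of s \<tau> w H] show "w \<in> {w \<in> space (F t). first_hit H \<tau> w \<le> enat t}"
      by (auto simp: space_F)
  qed
  moreover have "{w\<in>\<Omega>. enat s \<le> \<tau> w} \<inter> H s \<in> sets (F t)" if "s \<le> t" for s
    using stopping_time_ge_sets[OF \<tau>, of s] H[of s] sets_F_mono[OF that] by blast
  ultimately show "{w \<in> space (F t). first_hit H \<tau> w \<le> enat t} \<in> sets (F t)"
    by (auto intro!: sets.finite_UN)
qed

context
  fixes M :: "'a measure"
  assumes sets_F_le_M: "\<And>t. sets (F t) \<subseteq> sets M" and space_M: "space M = \<Omega>"
begin

lemma measurable_from_F: "f \<in> F t \<rightarrow>\<^sub>M N \<Longrightarrow> f \<in> M \<rightarrow>\<^sub>M N"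
  by (rule measurable_from_subalg[of M "F t"]) (auto simp: subalgebra_def space_F space_M sets_F_le_M)

lemma measurable_stopping_time:
  assumes \<tau>: "is_stopping_time F \<tau>"
  shows "\<tau> \<in> M \<rightarrow>\<^sub>M count_space UNIV"
  unfolding measurable_count_space_eq2_countable
proof (intro conjI ballI)
  fix a :: enat
  show "\<tau> -` {a} \<inter> space M \<in> sets M"
  proof (cases a)
    case (enat t)
    then have "\<tau> -` {a} \<inter> space M = {w\<in>\<Omega>. \<tau> w = enat t}" using space_M by auto
    then show ?thesis using stopping_time_eq_sets[OF \<tau>, of t] sets_F_le_M[of t] by auto
  next
    case infinity
    then have "\<tau> -` {a} \<inter> space M = space M - (\<Union>t. {w\<in>\<Omega>. \<tau> w \<le> enat t})"
      using space_M by (auto simp: enat_ile) (metis not_infinity_eq order_refl)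
    moreover have "(\<Union>t. {w\<in>\<Omega>. \<tau> w \<le> enat t}) \<in> sets M"
      using stopping_time_le_sets[OF \<tau>] sets_F_le_M by auto
    ultimately show ?thesis by auto
  qed
qed simp

lemma measurable_stopped:
  assumes "is_stopping_time F \<tau>" and "\<And>i. f i \<in> M \<rightarrow>\<^sub>M N"
  shows "(\<lambda>w. f (\<tau> w) w) \<in> M \<rightarrow>\<^sub>M N"
  by (rule measurable_compose_countable'[OF assms(2) measurable_stopping_time[OF assms(1)]]) auto

lemma borel_measurable_stopped_p:
  assumes "is_stopping_time F \<tau>" and [measurable]: "\<And>t. p t \<in> borel_measurable (F t)"
  shows "stopped_p p \<tau> \<in> borel_measurable M"
proof -
  have [measurable]: "p t \<in> borel_measurable M" for t by (rule measurable_from_F[OF assms(2)])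
  show ?thesis
    unfolding stopped_p_def by (rule measurable_stopped[OF assms(1)]) (auto split: enat.splits)
qed

lemma borel_measurable_stopped_e:
  assumes "is_stopping_time F \<tau>" and [measurable]: "\<And>t. e t \<in> borel_measurable (F t)"
  shows "stopped_e e \<tau> \<in> borel_measurable M"
proof -
  have [measurable]: "e t \<in> borel_measurable M" for t by (rule measurable_from_F[OF assms(2)])
  show ?thesis
    unfolding stopped_e_def by (rule measurable_stopped[OF assms(1)]) (auto split: enat.splits)
qed

lemma measurable_stopped_test:
  assumes "is_stopping_time F \<tau>" and [measurable]: "\<And>t. \<psi> t \<in> F t \<rightarrow>\<^sub>M count_space UNIV"
  shows "stopped_test \<psi> \<tau> \<in> M \<rightarrow>\<^sub>M count_space UNIV"
proof -
  have [measurable]: "\<psi> t \<in> M \<rightarrow>\<^sub>M count_space UNIV" for t by (rule measurable_from_F[OF assms(2)])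
  show ?thesis
    unfolding stopped_test_def limsup_bool_iff
    by (rule measurable_stopped[OF assms(1)]) (auto split: enat.splits)
qed

end

section \<open>Safety at finite stopping times suffices\<close>

definition adapted_approximable :: "'a measure \<Rightarrow> ('a \<Rightarrow> real) \<Rightarrow> bool" where
  "adapted_approximable M f \<longleftrightarrow>
     (\<forall>\<eta>>0. \<exists>N Z. Z \<in> borel_measurable (F N) \<and> (\<integral>\<^sup>+ w. ennreal \<bar>f w - Z w\<bar> \<partial>M) < ennreal \<eta>)"

context
  fixes M :: "'a measure"
  assumes sets_M: "sets M = sigma_sets \<Omega> (\<Union>t. sets (F t))" and prob_space_M: "prob_space M"
begin

interpretation M: prob_space M by (rule prob_space_M)

lemma space_M: "space M = \<Omega>"
  by (rule space_eq_if_sets_eq_sigma_F[OF sets_M])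

lemma sets_F_le_M: "sets (F t) \<subseteq> sets M"
  using sets_M by blast

lemma approx_UN_by_adapted_set:
  fixes A :: "nat \<Rightarrow> 'a set"
  assumes A: "range A \<subseteq> sets M"
    and approx: "\<And>i e. 0 < e \<Longrightarrow> \<exists>N B. B \<in> sets (F N) \<and> measure M (sym_diff (A i) B) < e"
    and "0 < e"
  shows "\<exists>N B. B \<in> sets (F N) \<and> measure M (sym_diff (\<Union>i. A i) B) < e"
proof -
  define V where "V n = (\<Union>i<n. A i)" for n
  have V: "V n \<in> sets M" for n unfolding V_def using A by auto
  have "(\<lambda>n. measure M (V n)) \<longlonglongrightarrow> measure M (\<Union>n. V n)"
    using V by (intro M.finite_Lim_measure_incseq) (auto simp: V_def incseq_def intro: less_le_trans)
  moreover have "(\<Union>n. V n) = (\<Union>i. A i)" unfolding V_def by auto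
  ultimately obtain n where n: "measure M (\<Union>i. A i) - measure M (V n) < e / 2"
    using \<open>0 < e\<close> unfolding LIMSEQ_iff by (metis half_gt_zero abs_minus_commute abs_less_iff
        le_refl real_norm_def)
  define e' where "e' = e / (2 * (real n + 1))"
  have "0 < e'" unfolding e'_def using \<open>0 < e\<close> by simp
  then obtain NN BB where BB: "\<And>i. BB i \<in> sets (F (NN i))"
    and sd: "\<And>i. measure M (sym_diff (A i) (BB i)) < e'"
    using approx by metis
  define N where "N = Max (NN ` {..<n})"
  have "BB i \<in> sets (F N)" if "i < n" for i
    using BB[of i] sets_F_mono[of "NN i" N] that unfolding N_def by (auto intro: Max_ge)
  then have B: "(\<Union>i<n. BB i) \<in> sets (F N)" by auto
  have sd_sets: "sym_diff (A i) (BB i) \<in> sets M" for i using A BB sets_F_le_M by blast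
  have "sym_diff (\<Union>i. A i) (\<Union>i<n. BB i) \<subseteq> ((\<Union>i. A i) - V n) \<union> (\<Union>i<n. sym_diff (A i) (BB i))"
    unfolding V_def by blast
  then have "measure M (sym_diff (\<Union>i. A i) (\<Union>i<n. BB i))
      \<le> measure M ((\<Union>i. A i) - V n) + measure M (\<Union>i<n. sym_diff (A i) (BB i))"
    using A V sd_sets by (intro order_trans[OF M.finite_measure_mono measure_subadditive]) auto
  also have "measure M ((\<Union>i. A i) - V n) = measure M (\<Union>i. A i) - measure M (V n)"
    using A V by (intro M.finite_measure_Diff) (auto simp: V_def)
  also have "measure M (\<Union>i<n. sym_diff (A i) (BB i)) \<le> (\<Sum>i<n. measure M (sym_diff (A i) (BB i)))"
    using sd_sets by (intro M.finite_measure_subadditive_finite) auto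
  also have "\<dots> \<le> real n * e'"
    using sum_mono[of "{..<n}" "\<lambda>i. measure M (sym_diff (A i) (BB i))" "\<lambda>_. e'"] sd
    by (simp add: less_imp_le)
  also have "real n * e' < e / 2" unfolding e'_def using \<open>0 < e\<close> by (simp add: field_simps)
  finally show ?thesis using n B by (intro exI[of _ N] exI[of _ "\<Union>i<n. BB i"]) auto
qed

lemma exists_adapted_set_approx:
  assumes "A \<in> sets M" "0 < e"
  shows "\<exists>N B. B \<in> sets (F N) \<and> measure M (sym_diff A B) < e"
proof -
  have gen: "(\<Union>t. sets (F t)) \<subseteq> Pow \<Omega>"
    using sets.space_closed[of "F _"] by (auto simp: space_F)
  have stable: "Int_stable (\<Union>t. sets (F t))"
  proof (rule Int_stableI)
    fix a b assume "a \<in> (\<Union>t. sets (F t))" "b \<in> (\<Union>t. sets (F t))"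
    then obtain s t where "a \<in> sets (F s)" "b \<in> sets (F t)" by auto
    then have "a \<in> sets (F (max s t))" "b \<in> sets (F (max s t))"
      using sets_F_mono[of s "max s t"] sets_F_mono[of t "max s t"] by auto
    then show "a \<inter> b \<in> (\<Union>t. sets (F t))" by blast
  qed
  have "A \<in> sigma_sets \<Omega> (\<Union>t. sets (F t))" using assms(1) sets_M by simp
  with stable gen have "\<forall>e>0. \<exists>N B. B \<in> sets (F N) \<and> measure M (sym_diff A B) < e"
  proof (induct rule: sigma_sets_induct_disjoint)
    case (basic A)
    then show ?case by (force intro: exI[of _ A])
  next
    case empty
    show ?case by (force intro: exI[of _ 0] exI[of _ "{}"])
  next
    case (compl A)
    show ?case
    proof (intro allI impI)
      fix e :: real assume "0 < e"
      then obtain N B where B: "B \<in> sets (F N)" "measure M (sym_diff A B) < e" using compl(2) by blast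
      have "A \<subseteq> \<Omega>" "B \<subseteq> \<Omega>"
        using sigma_sets_into_sp[OF gen compl(1)] sets.sets_into_space[OF B(1)] by (auto simp: space_F)
      then have "sym_diff (\<Omega> - A) (\<Omega> - B) = sym_diff A B" by blast
      moreover have "\<Omega> - B \<in> sets (F N)" using B(1) sets.compl_sets[of B "F N"] by (simp add: space_F)
      ultimately show "\<exists>N B. B \<in> sets (F N) \<and> measure M (sym_diff (\<Omega> - A) B) < e"
        using B(2) by metis
    qed
  next
    case (union A)
    then show ?case using approx_UN_by_adapted_set[of A] sets_M by auto
  qed
  then show ?thesis using assms(2) by blast
qed

lemma measurable_F_max:
  "Z \<in> borel_measurable (F N) \<Longrightarrow> Z \<in> borel_measurable (F (max N N'))"
proof -
  have "sets (F N) \<subseteq> sets (F (max N N'))" by (rule sets_F_mono) simp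
  then have "subalgebra (F (max N N')) (F N)" unfolding subalgebra_def by (simp add: space_F)
  then show "Z \<in> borel_measurable (F N) \<Longrightarrow> Z \<in> borel_measurable (F (max N N'))"
    by (rule measurable_from_subalg)
qed

lemma adapted_approximable_indicator:
  assumes "A \<in> sets M"
  shows "adapted_approximable M (\<lambda>w. indicator A w *\<^sub>R c)"
  unfolding adapted_approximable_def
proof (intro allI impI)
  fix \<eta> :: real assume "0 < \<eta>"
  then obtain N B where B: "B \<in> sets (F N)" and sd: "measure M (sym_diff A B) < \<eta> / (\<bar>c\<bar> + 1)"
    using exists_adapted_set_approx[OF assms, of "\<eta> / (\<bar>c\<bar> + 1)"] by auto
  have "sym_diff A B \<in> sets M" using assms B sets_F_le_M by blast
  moreover have "\<bar>indicator A w *\<^sub>R c - indicator B w *\<^sub>R c\<bar> = \<bar>c\<bar> * indicator (sym_diff A B) w" for w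
    by (auto simp: indicator_def)
  ultimately have eq: "(\<integral>\<^sup>+ w. ennreal \<bar>indicator A w *\<^sub>R c - indicator B w *\<^sub>R c\<bar> \<partial>M)
      = ennreal (\<bar>c\<bar> * measure M (sym_diff A B))"
    by (simp add: ennreal_mult' ennreal_indicator nn_integral_cmult_indicator M.emeasure_eq_measure)
  have "\<bar>c\<bar> * measure M (sym_diff A B) \<le> \<bar>c\<bar> * (\<eta> / (\<bar>c\<bar> + 1))"
    using sd by (intro mult_left_mono) auto
  also have "\<dots> < \<eta>" using \<open>0 < \<eta>\<close> by (simp add: field_simps)
  finally have "ennreal (\<bar>c\<bar> * measure M (sym_diff A B)) < ennreal \<eta>"
    using \<open>0 < \<eta>\<close> by (intro ennreal_lessI)
  moreover have "(\<lambda>w. indicator B w *\<^sub>R c) \<in> borel_measurable (F N)" using B by measurable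
  ultimately show "\<exists>N Z. Z \<in> borel_measurable (F N) \<and>
      (\<integral>\<^sup>+ w. ennreal \<bar>indicator A w *\<^sub>R c - Z w\<bar> \<partial>M) < ennreal \<eta>"
    using eq by (intro exI[of _ N] exI[of _ "\<lambda>w. indicator B w *\<^sub>R c"] conjI) simp_all
qed

lemma adapted_approximable_add:
  assumes [measurable]: "f \<in> borel_measurable M" "g \<in> borel_measurable M"
    and "adapted_approximable M f" "adapted_approximable M g"
  shows "adapted_approximable M (\<lambda>w. f w + g w)"
  unfolding adapted_approximable_def
proof (intro allI impI)
  fix \<eta> :: real assume "0 < \<eta>"
  then have "0 < \<eta> / 2" by simp
  then obtain N Z N' Z' where Z: "Z \<in> borel_measurable (F N)" "Z' \<in> borel_measurable (F N')"
    and approx: "(\<integral>\<^sup>+ w. ennreal \<bar>f w - Z w\<bar> \<partial>M) < ennreal (\<eta> / 2)"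
      "(\<integral>\<^sup>+ w. ennreal \<bar>g w - Z' w\<bar> \<partial>M) < ennreal (\<eta> / 2)"
    using assms(3,4) unfolding adapted_approximable_def by meson
  have [measurable]: "Z \<in> borel_measurable M" "Z' \<in> borel_measurable M"
    using Z by (auto intro: measurable_from_F[OF sets_F_le_M space_M])
  have "(\<integral>\<^sup>+ w. ennreal \<bar>f w + g w - (Z w + Z' w)\<bar> \<partial>M)
      \<le> (\<integral>\<^sup>+ w. ennreal \<bar>f w - Z w\<bar> \<partial>M) + (\<integral>\<^sup>+ w. ennreal \<bar>g w - Z' w\<bar> \<partial>M)"
  proof (rule nn_integral_abs_le_add)
    show "\<bar>f w + g w - (Z w + Z' w)\<bar> \<le> \<bar>f w - Z w\<bar> + \<bar>g w - Z' w\<bar>" for w by arith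
  qed (measurable, measurable)
  also have "\<dots> < ennreal \<eta>"
    using add_mono_ennreal[OF approx] by simp
  finally have "(\<integral>\<^sup>+ w. ennreal \<bar>f w + g w - (Z w + Z' w)\<bar> \<partial>M) < ennreal \<eta>" .
  moreover have "(\<lambda>w. Z w + Z' w) \<in> borel_measurable (F (max N N'))"
    using measurable_F_max[OF Z(1), of N'] measurable_F_max[OF Z(2), of N]
    unfolding max.commute[of N' N] by (rule borel_measurable_add)
  ultimately show "\<exists>N Z. Z \<in> borel_measurable (F N) \<and>
      (\<integral>\<^sup>+ w. ennreal \<bar>f w + g w - Z w\<bar> \<partial>M) < ennreal \<eta>"
    by (intro exI[of _ "max N N'"] exI[of _ "\<lambda>w. Z w + Z' w"] conjI)
qed

lemma adapted_approximable_lim: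
  fixes f :: "'a \<Rightarrow> real"
  assumes [measurable]: "f \<in> borel_measurable M" "\<And>i. s i \<in> borel_measurable M"
    and approx: "\<And>i. adapted_approximable M (s i)"
    and lim: "\<And>w. w \<in> space M \<Longrightarrow> (\<lambda>i. s i w) \<longlonglongrightarrow> f w"
    and bound: "\<And>i w. w \<in> space M \<Longrightarrow> norm (s i w) \<le> 2 * norm (f w)"
    and "integrable M f"
  shows "adapted_approximable M f"
  unfolding adapted_approximable_def
proof (intro allI impI)
  fix \<eta> :: real assume "0 < \<eta>"
  have "(\<lambda>i. \<integral>\<^sup>+ w. norm (f w - s i w) \<partial>M) \<longlonglongrightarrow> 0"
  proof (rule nn_integral_dominated_convergence_norm[where w="\<lambda>w. 2 * norm (f w)"])
    have "integrable M (\<lambda>w. 2 * f w)" using \<open>integrable M f\<close> by simp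
    then show "(\<integral>\<^sup>+ w. ennreal (2 * norm (f w)) \<partial>M) < \<infinity>"
      unfolding integrable_iff_bounded norm_mult by simp
  qed (use lim bound in simp_all)
  then have "eventually (\<lambda>i. (\<integral>\<^sup>+ w. ennreal \<bar>f w - s i w\<bar> \<partial>M) < ennreal (\<eta> / 2)) sequentially"
    using \<open>0 < \<eta>\<close> by (intro order_tendstoD(2)) auto
  then obtain i where i: "(\<integral>\<^sup>+ w. ennreal \<bar>f w - s i w\<bar> \<partial>M) < ennreal (\<eta> / 2)"
    by (auto simp: eventually_sequentially)
  have "0 < \<eta> / 2" using \<open>0 < \<eta>\<close> by simp
  then obtain N Z where Z: "Z \<in> borel_measurable (F N)"
    and approx_i: "(\<integral>\<^sup>+ w. ennreal \<bar>s i w - Z w\<bar> \<partial>M) < ennreal (\<eta> / 2)"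
    using approx[of i] unfolding adapted_approximable_def by meson
  have [measurable]: "Z \<in> borel_measurable M"
    using Z by (rule measurable_from_F[OF sets_F_le_M space_M])
  have "(\<integral>\<^sup>+ w. ennreal \<bar>f w - Z w\<bar> \<partial>M)
      \<le> (\<integral>\<^sup>+ w. ennreal \<bar>f w - s i w\<bar> \<partial>M) + (\<integral>\<^sup>+ w. ennreal \<bar>s i w - Z w\<bar> \<partial>M)"
  proof (rule nn_integral_abs_le_add)
    show "\<bar>f w - Z w\<bar> \<le> \<bar>f w - s i w\<bar> + \<bar>s i w - Z w\<bar>" for w by arith
  qed (measurable, measurable)
  also have "\<dots> < ennreal \<eta>"
    using add_mono_ennreal[OF i approx_i] by simp
  finally show "\<exists>N Z. Z \<in> borel_measurable (F N) \<and> (\<integral>\<^sup>+ w. ennreal \<bar>f w - Z w\<bar> \<partial>M) < ennreal \<eta>"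
    using Z by (intro exI[of _ N] exI[of _ Z] conjI)
qed

lemma adapted_approximable_integrable:
  fixes f :: "'a \<Rightarrow> real"
  assumes "integrable M f"
  shows "adapted_approximable M f"
  using assms
proof (induction rule: integrable_induct)
  case (base A c)
  from base(1) show ?case by (rule adapted_approximable_indicator)
next
  case (add f g)
  show ?case
    using borel_measurable_integrable[OF add.hyps(1)] borel_measurable_integrable[OF add.hyps(2)] add.IH
    by (rule adapted_approximable_add)
next
  case (lim f s)
  show ?case
    using borel_measurable_integrable[OF lim.hyps(4)] borel_measurable_integrable[OF lim.hyps(1)]
      lim.IH lim.hyps(2-4)
    by (rule adapted_approximable_lim)
qed

context
  fixes e :: "nat \<Rightarrow> 'a \<Rightarrow> ennreal"
  assumes e_meas[measurable]: "\<And>t. e t \<in> borel_measurable (F t)"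
    and safe_finite: "\<And>\<sigma>. is_stopping_time F \<sigma> \<Longrightarrow> (\<And>w. \<sigma> w \<noteq> \<infinity>) \<Longrightarrow>
      (\<integral>\<^sup>+ w. stopped_e e \<sigma> w \<partial>M) \<le> 1"
begin

lemma nn_integral_stopped_e_finite_le:
  assumes \<sigma>: "is_stopping_time F \<sigma>"
  shows "(\<integral>\<^sup>+ w. stopped_e e \<sigma> w * indicator {w. \<sigma> w \<noteq> \<infinity>} w \<partial>M) \<le> 1"
proof -
  define Y where "Y K w = stopped_e e \<sigma> w * indicator {w\<in>\<Omega>. \<sigma> w \<le> enat K} w" for K w
  have [measurable]: "stopped_e e \<sigma> \<in> borel_measurable M"
    by (rule borel_measurable_stopped_e[OF sets_F_le_M space_M \<sigma> e_meas])
  have [measurable]: "{w\<in>\<Omega>. \<sigma> w \<le> enat K} \<in> sets M" for K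
    using stopping_time_le_sets[OF \<sigma>] sets_F_le_M by blast
  have "(\<integral>\<^sup>+ w. stopped_e e \<sigma> w * indicator {w. \<sigma> w \<noteq> \<infinity>} w \<partial>M) \<le> (\<integral>\<^sup>+ w. (SUP K. Y K w) \<partial>M)"
  proof (intro nn_integral_mono)
    fix w assume w: "w \<in> space M"
    show "stopped_e e \<sigma> w * indicator {w. \<sigma> w \<noteq> \<infinity>} w \<le> (SUP K. Y K w)"
    proof (cases "\<sigma> w")
      case (enat m)
      then show ?thesis using w by (intro SUP_upper2[of m]) (auto simp: Y_def space_M)
    qed simp
  qed
  also have "\<dots> = (SUP K. \<integral>\<^sup>+ w. Y K w \<partial>M)"
  proof (rule nn_integral_monotone_convergence_SUP)
    show "incseq Y"
      unfolding Y_def by (intro incseq_SucI le_funI mult_left_mono)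
        (auto simp: indicator_def intro: order_trans[OF _ enat_ord_simps(1)[THEN iffD2]])
  qed (simp add: Y_def)
  also have "\<dots> \<le> 1"
  proof (rule SUP_least)
    fix K
    have "(\<integral>\<^sup>+ w. Y K w \<partial>M) \<le> (\<integral>\<^sup>+ w. stopped_e e (\<lambda>w. min (\<sigma> w) (enat K)) w \<partial>M)"
      by (intro nn_integral_mono) (auto simp: Y_def stopped_e_def indicator_def min_def split: enat.splits)
    also have "\<dots> \<le> 1"
      by (rule safe_finite[OF stopping_time_min_const[OF \<sigma>]]) (auto simp: min_def dest: enat_ile)
    finally show "(\<integral>\<^sup>+ w. Y K w \<partial>M) \<le> 1" .
  qed
  finally show ?thesis .
qed

lemma nn_integral_threshold_stopped_e_le:
  fixes Z :: "'a \<Rightarrow> real"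
  assumes \<tau>: "is_stopping_time F \<tau>" and Z: "Z \<in> borel_measurable (F N)"
  shows "(\<integral>\<^sup>+ w. (if ennreal (Z w) < stopped_e e \<tau> w then ennreal (Z w) else 0) \<partial>M) \<le> 1"
proof -
  \<comment> \<open>Stop at \<tau> if \<tau> < N, and otherwise at the first time in [N, \<tau>] at which e reaches Z.\<close>
  define H where "H t = (if t < N then {w\<in>\<Omega>. \<tau> w = enat t} else {w\<in>\<Omega>. ennreal (Z w) \<le> e t w})" for t
  have "H t \<in> sets (F t)" for t
  proof (cases "t < N")
    case False
    then have [measurable]: "Z \<in> borel_measurable (F t)"
      using measurable_F_max[OF Z, of t] by (simp add: max_def)
    have "{w\<in>space (F t). ennreal (Z w) \<le> e t w} \<in> sets (F t)" by measurable
    then show ?thesis using False unfolding H_def by (simp add: space_F)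
  qed (simp add: H_def stopping_time_eq_sets[OF \<tau>])
  then have \<sigma>: "is_stopping_time F (first_hit H \<tau>)" by (rule stopping_time_first_hit[OF _ \<tau>])
  have "\<exists>m. first_hit H \<tau> w = enat m \<and> ennreal (Z w) \<le> e m w"
    if w: "w \<in> \<Omega>" "ennreal (Z w) < stopped_e e \<tau> w" for w
  proof -
    have "\<exists>t. enat t \<le> \<tau> w \<and> w \<in> H t"
    proof (cases "\<tau> w")
      case (enat t)
      then show ?thesis using w by (intro exI[of _ t]) (auto simp: H_def stopped_e_def)
    next
      case infinity
      then obtain t where "N \<le> t" "ennreal (Z w) < e t w"
        using w less_limsup_imp_ex_ge[of _ "\<lambda>t. e t w" N] by (auto simp: stopped_e_def)
      then show ?thesis using w infinity by (intro exI[of _ t]) (auto simp: H_def)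
    qed
    then obtain m where m: "first_hit H \<tau> w = enat m" "w \<in> H m"
      using first_hitI by blast
    then have "enat m \<le> \<tau> w" using first_hitD by blast
    with m w show ?thesis by (auto simp: H_def stopped_e_def split: if_splits)
  qed
  then have "(\<integral>\<^sup>+ w. (if ennreal (Z w) < stopped_e e \<tau> w then ennreal (Z w) else 0) \<partial>M)
      \<le> (\<integral>\<^sup>+ w. stopped_e e (first_hit H \<tau>) w * indicator {w. first_hit H \<tau> w \<noteq> \<infinity>} w \<partial>M)"
    by (intro nn_integral_mono) (fastforce simp: space_M stopped_e_def)
  also have "\<dots> \<le> 1" by (rule nn_integral_stopped_e_finite_le[OF \<sigma>])
  finally show ?thesis .
qed

lemma nn_integral_min_stopped_e_le_deviation:
  assumes \<tau>: "is_stopping_time F \<tau>" and "0 \<le> C" "0 < \<delta>" and Z[measurable]: "Z \<in> borel_measurable (F N)"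
  defines "V w \<equiv> enn2real (min (stopped_e e \<tau> w) (ennreal C))"
  shows "(\<integral>\<^sup>+ w. min (stopped_e e \<tau> w) (ennreal C) \<partial>M)
    \<le> 1 + ennreal (2 * \<delta>) + ennreal (1 + C / (2 * \<delta>)) * (\<integral>\<^sup>+ w. ennreal \<bar>V w - Z w\<bar> \<partial>M)"
proof -
  have [measurable]: "stopped_e e \<tau> \<in> borel_measurable M"
    by (rule borel_measurable_stopped_e[OF sets_F_le_M space_M \<tau> e_meas])
  have [measurable]: "Z \<in> borel_measurable M" by (rule measurable_from_F[OF sets_F_le_M space_M Z])
  have [measurable]: "V \<in> borel_measurable M" unfolding V_def by measurable
  define g where
    "g w = (if ennreal (Z w - 2 * \<delta>) < stopped_e e \<tau> w then ennreal (Z w - 2 * \<delta>) else 0)" for w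
  have [measurable]: "g \<in> borel_measurable M" unfolding g_def by measurable
  have "(\<integral>\<^sup>+ w. min (stopped_e e \<tau> w) (ennreal C) \<partial>M)
      \<le> (\<integral>\<^sup>+ w. g w + ennreal (2 * \<delta>) + ennreal (1 + C / (2 * \<delta>)) * ennreal \<bar>V w - Z w\<bar> \<partial>M)"
    unfolding g_def V_def using \<open>0 \<le> C\<close> \<open>0 < \<delta>\<close>
    by (intro nn_integral_mono min_le_threshold_plus_deviation)
      (auto simp: min_less_iff_disj intro!: enn2real_leI ennreal_enn2real[symmetric])
  also have "\<dots> = (\<integral>\<^sup>+ w. g w \<partial>M) + ennreal (2 * \<delta>)
      + ennreal (1 + C / (2 * \<delta>)) * (\<integral>\<^sup>+ w. ennreal \<bar>V w - Z w\<bar> \<partial>M)"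
    by (simp add: nn_integral_add nn_integral_cmult M.emeasure_space_1)
  also have "(\<integral>\<^sup>+ w. g w \<partial>M) \<le> 1"
    unfolding g_def by (rule nn_integral_threshold_stopped_e_le[OF \<tau>]) measurable
  finally show ?thesis by (simp add: add_right_mono)
qed

lemma nn_integral_min_stopped_e_le:
  assumes \<tau>: "is_stopping_time F \<tau>" and "0 \<le> C" "0 < \<epsilon>"
  shows "(\<integral>\<^sup>+ w. min (stopped_e e \<tau> w) (ennreal C) \<partial>M) \<le> 1 + ennreal \<epsilon>"
proof -
  define V where "V w = enn2real (min (stopped_e e \<tau> w) (ennreal C))" for w
  have "V \<in> borel_measurable M"
    unfolding V_def using borel_measurable_stopped_e[OF sets_F_le_M space_M \<tau> e_meas] by measurable
  moreover have "\<bar>V w\<bar> \<le> C" for w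
    unfolding V_def using \<open>0 \<le> C\<close> by (auto intro!: enn2real_leI)
  ultimately have "integrable M V" by (intro M.integrable_const_bound[where B=C]) auto
  define \<delta> where "\<delta> = \<epsilon> / 4"
  define k where "k = 1 + C / (2 * \<delta>)"
  have "0 < \<delta>" using \<open>0 < \<epsilon>\<close> by (simp add: \<delta>_def)
  then have "1 \<le> k" using \<open>0 \<le> C\<close> by (simp add: k_def)
  then have "0 < \<epsilon> / (4 * k)" using \<open>0 < \<epsilon>\<close> by simp
  then obtain N Z where Z: "Z \<in> borel_measurable (F N)"
    and approx: "(\<integral>\<^sup>+ w. ennreal \<bar>V w - Z w\<bar> \<partial>M) < ennreal (\<epsilon> / (4 * k))"
    using adapted_approximable_integrable[OF \<open>integrable M V\<close>]
    unfolding adapted_approximable_def by blast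
  have "(\<integral>\<^sup>+ w. min (stopped_e e \<tau> w) (ennreal C) \<partial>M)
      \<le> 1 + ennreal (2 * \<delta>) + ennreal k * (\<integral>\<^sup>+ w. ennreal \<bar>V w - Z w\<bar> \<partial>M)"
    using nn_integral_min_stopped_e_le_deviation[OF \<tau> \<open>0 \<le> C\<close> \<open>0 < \<delta>\<close> Z]
    unfolding V_def k_def .
  also have "\<dots> \<le> 1 + ennreal (2 * \<delta>) + ennreal k * ennreal (\<epsilon> / (4 * k))"
    using approx by (intro add_mono mult_left_mono) auto
  also have "ennreal k * ennreal (\<epsilon> / (4 * k)) = ennreal (\<epsilon> / 4)"
    using \<open>1 \<le> k\<close> \<open>0 < \<epsilon>\<close> by (simp add: ennreal_mult[symmetric])
  also have "1 + ennreal (2 * \<delta>) + ennreal (\<epsilon> / 4) \<le> 1 + ennreal \<epsilon>"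
    using \<open>0 < \<epsilon>\<close> unfolding \<delta>_def add.assoc
    by (intro add_left_mono) (simp add: ennreal_plus[symmetric] del: ennreal_plus)
  finally show ?thesis .
qed

lemma nn_integral_stopped_e_le:
  assumes \<tau>: "is_stopping_time F \<tau>"
  shows "(\<integral>\<^sup>+ w. stopped_e e \<tau> w \<partial>M) \<le> 1"
proof -
  have [measurable]: "stopped_e e \<tau> \<in> borel_measurable M"
    by (rule borel_measurable_stopped_e[OF sets_F_le_M space_M \<tau> e_meas])
  have "(\<integral>\<^sup>+ w. stopped_e e \<tau> w \<partial>M) = (\<integral>\<^sup>+ w. (SUP n. min (stopped_e e \<tau> w) (of_nat n)) \<partial>M)"
    by (simp add: SUP_min_of_nat_ennreal)
  also have "\<dots> = (SUP n. \<integral>\<^sup>+ w. min (stopped_e e \<tau> w) (of_nat n) \<partial>M)"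
    by (rule nn_integral_monotone_convergence_SUP) (auto intro!: incseq_SucI le_funI min.mono)
  also have "\<dots> \<le> 1"
  proof (rule SUP_least)
    fix n :: nat
    have "(\<integral>\<^sup>+ w. min (stopped_e e \<tau> w) (ennreal (real n)) \<partial>M) \<le> 1"
      by (rule ennreal_le_epsilon, rule nn_integral_min_stopped_e_le[OF \<tau>]) simp_all
    then show "(\<integral>\<^sup>+ w. min (stopped_e e \<tau> w) (of_nat n) \<partial>M) \<le> 1"
      by (simp add: ennreal_of_nat_eq_real_of_nat)
  qed
  finally show ?thesis .
qed

end

end

end

section \<open>Families dominated by one probability on each \<open>F t\<close>\<close>

locale dominated_family = nat_filtration \<Omega> F for \<Omega> :: "'a set" and F +
  fixes \<Q> :: "'a measure set" and R :: "'a measure"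
  assumes prob_space_Q: "Q \<in> \<Q> \<Longrightarrow> prob_space Q"
    and sets_Q: "Q \<in> \<Q> \<Longrightarrow> sets Q = sigma_sets \<Omega> (\<Union>t. sets (F t))"
    and prob_space_R: "prob_space R"
    and sets_R: "sets R = sigma_sets \<Omega> (\<Union>t. sets (F t))"
    and null_R_imp_null_Q: "Q \<in> \<Q> \<Longrightarrow> A \<in> sets (F t) \<Longrightarrow> emeasure R A = 0 \<Longrightarrow> emeasure Q A = 0"
begin

lemma space_Q: "Q \<in> \<Q> \<Longrightarrow> space Q = \<Omega>"
  using space_eq_if_sets_eq_sigma_F sets_Q by blast

lemma space_R: "space R = \<Omega>"
  using space_eq_if_sets_eq_sigma_F sets_R by blast

lemma sets_F_le_Q: "Q \<in> \<Q> \<Longrightarrow> sets (F t) \<subseteq> sets Q"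
  using sets_Q by blast

lemma sets_F_le_R: "sets (F t) \<subseteq> sets R"
  using sets_R by blast

lemma emeasure_R_neq_0:
  assumes "Q \<in> \<Q>" "A \<in> sets (F t)" "measure Q A > 0"
  shows "emeasure R A \<noteq> 0"
  using null_R_imp_null_Q[OF assms(1,2)] assms(3) by (auto simp: measure_def)

lemma integrable_R_bounded:
  fixes f :: "'a \<Rightarrow> real"
  assumes "f \<in> borel_measurable (F t)" "\<And>w. w \<in> \<Omega> \<Longrightarrow> \<bar>f w\<bar> \<le> B"
  shows "integrable R f"
proof -
  interpret R: prob_space R by (rule prob_space_R)
  show ?thesis
    using assms measurable_from_F[OF sets_F_le_R space_R]
    by (intro R.integrable_const_bound[where B=B]) (auto simp: space_R)
qed

lemma measure_ever_hit_le:
  assumes Q: "Q \<in> \<Q>" and \<tau>: "is_stopping_time F \<tau>"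
    and P: "\<And>n t. {w\<in>\<Omega>. P n t w} \<in> sets (F t)" and P_mono: "\<And>n t w. w \<in> \<Omega> \<Longrightarrow> P n t w \<Longrightarrow> P (Suc n) t w"
    and hit_le: "\<And>n \<rho>. is_stopping_time F \<rho> \<Longrightarrow> measure Q {w\<in>\<Omega>. \<exists>m. \<rho> w = enat m \<and> P n m w} \<le> c"
    and E: "E \<subseteq> {w\<in>\<Omega>. \<exists>n t. enat t \<le> \<tau> w \<and> P n t w}"
  shows "measure Q E \<le> c"
proof -
  interpret Q: prob_space Q using prob_space_Q[OF Q] .
  define B where "B n = {w\<in>\<Omega>. \<exists>t. enat t \<le> \<tau> w \<and> P n t w}" for n
  have "B n = (\<Union>t. {w\<in>\<Omega>. enat t \<le> \<tau> w} \<inter> {w\<in>\<Omega>. P n t w})" for n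
    unfolding B_def by auto
  moreover have "{w\<in>\<Omega>. enat t \<le> \<tau> w} \<inter> {w\<in>\<Omega>. P n t w} \<in> sets Q" for n t
    using stopping_time_ge_sets[OF \<tau>] P sets_F_le_Q[OF Q] by blast
  ultimately have B_sets: "B n \<in> sets Q" for n
    by (auto intro: sets.countable_UN)
  have "incseq B"
    using P_mono unfolding B_def by (intro incseq_SucI) blast
  moreover have "measure Q (B n) \<le> c" for n
  proof -
    let ?H = "\<lambda>t. {w\<in>\<Omega>. P n t w}"
    \<comment> \<open>Stopping at the first time before \<tau> at which P n holds catches every path of B n.\<close>
    have "B n = {w\<in>\<Omega>. \<exists>m. first_hit ?H \<tau> w = enat m \<and> P n m w}"
      unfolding B_def using first_hitI[of _ \<tau> _ ?H] first_hitD[of ?H \<tau>] by blast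
    then show ?thesis using hit_le stopping_time_first_hit[OF P \<tau>] by simp
  qed
  ultimately have "measure Q (\<Union>n. B n) \<le> c"
    using B_sets by (intro Q.measure_UN_incseq_le) auto
  moreover have "measure Q E \<le> measure Q (\<Union>n. B n)"
    using E B_sets unfolding B_def by (intro Q.finite_measure_mono) blast+
  ultimately show ?thesis by simp
qed

lemma measure_valid_p_hit_le:
  assumes valid: "valid_p F \<Q> p" and Q: "Q \<in> \<Q>" and \<rho>: "is_stopping_time F \<rho>" and "0 \<le> \<beta>"
  shows "measure Q {w\<in>\<Omega>. \<exists>m. \<rho> w = enat m \<and> p m w < \<beta>} \<le> \<beta>"
proof (cases "\<beta> \<le> 1")
  case True
  interpret Q: prob_space Q using prob_space_Q[OF Q] .
  have [measurable]: "p t \<in> borel_measurable (F t)" for t using valid unfolding valid_p_def by auto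
  have "{w\<in>\<Omega>. \<exists>m. \<rho> w = enat m \<and> p m w < \<beta>} \<subseteq> {w \<in> space Q. stopped_p p \<rho> w \<le> \<beta>}"
    by (auto simp: space_Q[OF Q] stopped_p_def)
  moreover have "{w \<in> space Q. stopped_p p \<rho> w \<le> \<beta>} \<in> sets Q"
    using borel_measurable_stopped_p[OF sets_F_le_Q[OF Q] space_Q[OF Q] \<rho>] by measurable
  ultimately have "measure Q {w\<in>\<Omega>. \<exists>m. \<rho> w = enat m \<and> p m w < \<beta>}
      \<le> measure Q {w \<in> space Q. stopped_p p \<rho> w \<le> \<beta>}"
    by (rule Q.finite_measure_mono)
  also have "\<dots> \<le> \<beta>" using valid \<rho> Q True \<open>0 \<le> \<beta>\<close> unfolding valid_p_def by simp
  finally show ?thesis .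
next
  case False
  interpret Q: prob_space Q using prob_space_Q[OF Q] .
  show ?thesis using False Q.prob_le_1[of "{w\<in>\<Omega>. \<exists>m. \<rho> w = enat m \<and> p m w < \<beta>}"] by linarith
qed

lemma valid_p_INF:
  assumes valid: "\<And>n. valid_p F \<Q> (s n)" and dec: "\<And>n. process_le \<Omega> (s (Suc n)) (s n)"
  shows "valid_p F \<Q> (\<lambda>t w. INF n. s n t w)"
proof -
  have meas[measurable]: "s n t \<in> borel_measurable (F t)" for n t
    using valid unfolding valid_p_def by auto
  have range: "0 \<le> s n t w \<and> s n t w \<le> 1" if "w \<in> \<Omega>" for n t w
    using valid that unfolding valid_p_def by (auto simp: space_F)
  have "measure Q {w \<in> space Q. stopped_p (\<lambda>t w. INF n. s n t w) \<tau> w \<le> \<alpha>} \<le> \<alpha> + e"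
    if \<tau>: "is_stopping_time F \<tau>" and Q: "Q \<in> \<Q>" and "0 \<le> \<alpha>" "0 < e" for \<tau> Q \<alpha> e
  proof (rule measure_ever_hit_le[OF Q \<tau>, where P="\<lambda>n t w. s n t w < \<alpha> + e"])
    show "{w\<in>\<Omega>. s n t w < \<alpha> + e} \<in> sets (F t)" for n t
    proof -
      have "{w \<in> space (F t). s n t w < \<alpha> + e} \<in> sets (F t)" by measurable
      then show ?thesis by (simp add: space_F)
    qed
    show "s (Suc n) t w < \<alpha> + e" if "w \<in> \<Omega>" "s n t w < \<alpha> + e" for n t w
      using dec[of n] that unfolding process_le_def by (meson le_less_trans)
    show "measure Q {w\<in>\<Omega>. \<exists>m. \<rho> w = enat m \<and> s n m w < \<alpha> + e} \<le> \<alpha> + e"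
      if "is_stopping_time F \<rho>" for n \<rho>
      using measure_valid_p_hit_le[OF valid Q that, of "\<alpha> + e"] \<open>0 \<le> \<alpha>\<close> \<open>0 < e\<close> by simp
    show "{w \<in> space Q. stopped_p (\<lambda>t w. INF n. s n t w) \<tau> w \<le> \<alpha>}
        \<subseteq> {w\<in>\<Omega>. \<exists>n t. enat t \<le> \<tau> w \<and> s n t w < \<alpha> + e}"
    proof
      fix w assume w: "w \<in> {w \<in> space Q. stopped_p (\<lambda>t w. INF n. s n t w) \<tau> w \<le> \<alpha>}"
      then have "w \<in> \<Omega>" using space_Q[OF Q] by simp
      with w show "w \<in> {w\<in>\<Omega>. \<exists>n t. enat t \<le> \<tau> w \<and> s n t w < \<alpha> + e}"
        using stopped_p_INF_less_imp_ex_less[of s w \<tau> "\<alpha> + e"] range \<open>0 < e\<close> by auto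
    qed
  qed
  note bound = this
  have "measure Q {w \<in> space Q. stopped_p (\<lambda>t w. INF n. s n t w) \<tau> w \<le> \<alpha>} \<le> \<alpha>"
    if "is_stopping_time F \<tau>" "Q \<in> \<Q>" "0 \<le> \<alpha>" for \<tau> Q \<alpha>
    using bound[OF that] by (rule field_le_epsilon)
  moreover have "(\<lambda>w. INF n. s n t w) \<in> borel_measurable (F t)" for t
    by (intro borel_measurable_cINF_real) auto
  moreover have "0 \<le> (INF n. s n t w) \<and> (INF n. s n t w) \<le> 1" if "w \<in> \<Omega>" for t w
  proof
    show "0 \<le> (INF n. s n t w)" using range[OF that] by (intro cINF_greatest) auto
    have "(INF n. s n t w) \<le> s 0 t w"
      using range[OF that] by (intro cINF_lower bdd_belowI[of _ 0]) auto
    then show "(INF n. s n t w) \<le> 1" using range[OF that, of 0 t] by linarith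
  qed
  ultimately show ?thesis unfolding valid_p_def by (simp add: space_F)
qed

lemma valid_p_min:
  assumes valid': "valid_p F \<Q> p'" and valid: "valid_p F \<Q> p" and dom: "dominates_p \<Q> p' p"
  shows "valid_p F \<Q> (\<lambda>t w. min (p' t w) (p t w))"
proof -
  let ?m = "\<lambda>t w. min (p' t w) (p t w)"
  have [measurable]: "p' t \<in> borel_measurable (F t)" "p t \<in> borel_measurable (F t)" for t
    using valid valid' unfolding valid_p_def by auto
  have "measure Q {w \<in> space Q. stopped_p ?m \<tau> w \<le> \<alpha>} \<le> \<alpha>"
    if \<tau>: "is_stopping_time F \<tau>" and Q: "Q \<in> \<Q>" and "0 \<le> \<alpha>" "\<alpha> \<le> 1" for \<tau> Q \<alpha>
  proof -
    have "AE w in Q. \<forall>t. p' t w \<le> p t w"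
      using dom Q unfolding dominates_p_def by (simp add: AE_all_countable)
    then have "AE w in Q. stopped_p ?m \<tau> w = stopped_p p' \<tau> w"
    proof eventually_elim
      case (elim w)
      then have "min (p' t w) (p t w) = p' t w" for t by (simp add: min_absorb1)
      then show ?case unfolding stopped_p_def by (simp only:)
    qed
    moreover have "stopped_p ?m \<tau> \<in> borel_measurable Q" "stopped_p p' \<tau> \<in> borel_measurable Q"
      by (intro borel_measurable_stopped_p[OF sets_F_le_Q[OF Q] space_Q[OF Q] \<tau>]; measurable)+
    ultimately have "measure Q {w \<in> space Q. stopped_p ?m \<tau> w \<le> \<alpha>}
        = measure Q {w \<in> space Q. stopped_p p' \<tau> w \<le> \<alpha>}"
      by (intro measure_eq_AE) auto
    also have "\<dots> \<le> \<alpha>" using valid' \<tau> Q that unfolding valid_p_def by auto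
    finally show ?thesis .
  qed
  moreover have "?m t \<in> borel_measurable (F t)" for t by measurable
  ultimately show ?thesis
    using valid valid' unfolding valid_p_def by (auto simp: min_def)
qed

lemma integrable_R_valid_p: "valid_p F \<Q> q \<Longrightarrow> integrable R (q t)"
  unfolding valid_p_def by (intro integrable_R_bounded[where B=1]) (auto simp: space_F)

lemma integral_R_min_less:
  assumes x: "valid_p F \<Q> x" and y: "valid_p F \<Q> y" and Q: "Q \<in> \<Q>"
    and pos: "measure Q {w \<in> space Q. y t w < x t w} > 0"
  shows "(\<integral>w. min (y t w) (x t w) \<partial>R) < (\<integral>w. x t w \<partial>R)"
proof -
  interpret R: prob_space R by (rule prob_space_R)
  have [measurable]: "y t \<in> borel_measurable (F t)" "x t \<in> borel_measurable (F t)"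
    using x y unfolding valid_p_def by auto
  define A where "A = {w \<in> space (F t). y t w < x t w}"
  have A: "A \<in> sets (F t)" unfolding A_def by measurable
  then have "emeasure R A \<noteq> 0"
    using emeasure_R_neq_0[OF Q A] pos unfolding A_def by (simp add: space_F space_Q[OF Q])
  moreover have "A \<in> sets R" using A sets_F_le_R by blast
  moreover have "integrable R (\<lambda>w. min (y t w) (x t w))"
    using integrable_R_valid_p[OF y] integrable_R_valid_p[OF x] by (rule integrable_min)
  ultimately show ?thesis
    using integrable_R_valid_p[OF x] by (intro R.integral_less_AE[where A=A]) (auto simp: A_def)
qed

lemma exists_admissible_p_below:
  assumes "valid_p F \<Q> p"
  shows "\<exists>p'. admissible_p F \<Q> p' \<and> dominates_p \<Q> p' p"
proof -
  define \<Phi> where "\<Phi> t q = (\<integral>w. q t w \<partial>R)" for t and q :: "nat \<Rightarrow> 'a \<Rightarrow> real"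
  have "\<exists>x\<in>{q. valid_p F \<Q> q}. process_le \<Omega> x p \<and> \<not> (\<exists>y\<in>{q. valid_p F \<Q> q}.
      dominates_p \<Q> y x \<and> (\<exists>t. \<exists>Q\<in>\<Q>. measure Q {w \<in> space Q. y t w < x t w} > 0))"
  proof (rule exists_unimprovable_below[where \<Phi>=\<Phi>])
    show "\<Phi> t x \<le> \<Phi> t y" if "x \<in> {q. valid_p F \<Q> q}" "y \<in> {q. valid_p F \<Q> q}" "process_le \<Omega> x y" for x y t
      using that integrable_R_valid_p unfolding \<Phi>_def process_le_def
      by (intro integral_mono) (auto simp: space_R)
    show "0 \<le> \<Phi> t x" if "x \<in> {q. valid_p F \<Q> q}" for x t
      using that unfolding \<Phi>_def valid_p_def by (intro integral_nonneg_AE AE_I2) (auto simp: space_R space_F)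
    show "\<exists>l\<in>{q. valid_p F \<Q> q}. \<forall>n. process_le \<Omega> l (s n)"
      if "\<And>n. s n \<in> {q. valid_p F \<Q> q}" "\<And>n. process_le \<Omega> (s (Suc n)) (s n)" for s
    proof (intro bexI allI)
      show "process_le \<Omega> (\<lambda>t w. INF n. s n t w) (s n)" for n
        using that(1) unfolding process_le_def valid_p_def
        by (auto intro!: cINF_lower bdd_belowI[of _ 0] simp: space_F)
    qed (use valid_p_INF that in blast)
    show "\<exists>z\<in>{q. valid_p F \<Q> q}. process_le \<Omega> z x \<and> (\<exists>t. \<Phi> t z < \<Phi> t x)"
      if x: "x \<in> {q. valid_p F \<Q> q}" and y: "y \<in> {q. valid_p F \<Q> q}"
        and better: "dominates_p \<Q> y x \<and> (\<exists>t. \<exists>Q\<in>\<Q>. measure Q {w \<in> space Q. y t w < x t w} > 0)"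
      for x y
    proof -
      obtain t Q where dom: "dominates_p \<Q> y x" and Q: "Q \<in> \<Q>"
        and pos: "measure Q {w \<in> space Q. y t w < x t w} > 0"
        using better by blast
      have "\<Phi> t (\<lambda>t w. min (y t w) (x t w)) < \<Phi> t x"
        using integral_R_min_less[of x y Q t] x y Q pos unfolding \<Phi>_def by simp
      then show ?thesis
        using x y valid_p_min[OF _ _ dom] unfolding process_le_def
        by (intro bexI[of _ "\<lambda>t w. min (y t w) (x t w)"]) auto
    qed
  qed (use assms in \<open>auto intro: process_le_trans process_le_refl\<close>)
  then obtain x where "admissible_p F \<Q> x" "process_le \<Omega> x p"
    unfolding admissible_p_def by blast
  moreover have "dominates_p \<Q> x p"
    using \<open>process_le \<Omega> x p\<close> unfolding dominates_p_def process_le_def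
    by (auto intro!: AE_I2 simp: space_Q)
  ultimately show ?thesis by blast
qed

lemma measure_seq_test_hit_le:
  assumes test: "seq_test F \<Q> \<alpha> \<psi>" and Q: "Q \<in> \<Q>" and \<rho>: "is_stopping_time F \<rho>"
  shows "measure Q {w\<in>\<Omega>. \<exists>m. \<rho> w = enat m \<and> \<psi> m w} \<le> \<alpha>"
proof -
  interpret Q: prob_space Q using prob_space_Q[OF Q] .
  have [measurable]: "\<psi> t \<in> F t \<rightarrow>\<^sub>M count_space UNIV" for t using test unfolding seq_test_def by auto
  have "{w\<in>\<Omega>. \<exists>m. \<rho> w = enat m \<and> \<psi> m w} \<subseteq> {w \<in> space Q. stopped_test \<psi> \<rho> w}"
    by (auto simp: space_Q[OF Q] stopped_test_def)
  moreover have "{w \<in> space Q. stopped_test \<psi> \<rho> w} \<in> sets Q"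
    using measurable_stopped_test[OF sets_F_le_Q[OF Q] space_Q[OF Q] \<rho>] by measurable
  ultimately have "measure Q {w\<in>\<Omega>. \<exists>m. \<rho> w = enat m \<and> \<psi> m w}
      \<le> measure Q {w \<in> space Q. stopped_test \<psi> \<rho> w}"
    by (rule Q.finite_measure_mono)
  also have "\<dots> \<le> \<alpha>" using test \<rho> Q unfolding seq_test_def by simp
  finally show ?thesis .
qed

lemma seq_test_Ex:
  assumes test: "\<And>n. seq_test F \<Q> \<alpha> (s n)" and inc: "\<And>n. process_le \<Omega> (s n) (s (Suc n))"
  shows "seq_test F \<Q> \<alpha> (\<lambda>t w. \<exists>n. s n t w)"
proof -
  have meas[measurable]: "s n t \<in> F t \<rightarrow>\<^sub>M count_space UNIV" for n t
    using test unfolding seq_test_def by auto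
  have "measure Q {w \<in> space Q. stopped_test (\<lambda>t w. \<exists>n. s n t w) \<tau> w} \<le> \<alpha>"
    if \<tau>: "is_stopping_time F \<tau>" and Q: "Q \<in> \<Q>" for \<tau> Q
  proof (rule measure_ever_hit_le[OF Q \<tau>, where P=s])
    show "{w\<in>\<Omega>. s n t w} \<in> sets (F t)" for n t
    proof -
      have "{w \<in> space (F t). s n t w} \<in> sets (F t)" by measurable
      then show ?thesis by (simp add: space_F)
    qed
    show "s (Suc n) t w" if "w \<in> \<Omega>" "s n t w" for n t w
      using inc[of n] that unfolding process_le_def by (auto simp: le_bool_def)
    show "measure Q {w\<in>\<Omega>. \<exists>m. \<rho> w = enat m \<and> s n m w} \<le> \<alpha>" if "is_stopping_time F \<rho>" for n \<rho>
      by (rule measure_seq_test_hit_le[OF test Q that])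
    show "{w \<in> space Q. stopped_test (\<lambda>t w. \<exists>n. s n t w) \<tau> w} \<subseteq> {w\<in>\<Omega>. \<exists>n t. enat t \<le> \<tau> w \<and> s n t w}"
    proof
      fix w assume w: "w \<in> {w \<in> space Q. stopped_test (\<lambda>t w. \<exists>n. s n t w) \<tau> w}"
      then obtain t n where "enat t \<le> \<tau> w" "s n t w"
        by (cases "\<tau> w") (auto simp: stopped_test_def limsup_bool_iff)
      then show "w \<in> {w\<in>\<Omega>. \<exists>n t. enat t \<le> \<tau> w \<and> s n t w}"
        using w space_Q[OF Q] by auto
    qed
  qed
  moreover have "(\<lambda>w. \<exists>n. s n t w) \<in> F t \<rightarrow>\<^sub>M count_space UNIV" for t by measurable
  ultimately show ?thesis unfolding seq_test_def by simp
qed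

lemma seq_test_disj:
  assumes test': "seq_test F \<Q> \<alpha> \<psi>'" and test: "seq_test F \<Q> \<alpha> \<psi>"
    and dom: "dominates_test \<Q> \<psi>' \<psi>"
  shows "seq_test F \<Q> \<alpha> (\<lambda>t w. \<psi>' t w \<or> \<psi> t w)"
proof -
  let ?d = "\<lambda>t w. \<psi>' t w \<or> \<psi> t w"
  have [measurable]: "\<psi>' t \<in> F t \<rightarrow>\<^sub>M count_space UNIV" "\<psi> t \<in> F t \<rightarrow>\<^sub>M count_space UNIV" for t
    using test test' unfolding seq_test_def by auto
  have "measure Q {w \<in> space Q. stopped_test ?d \<tau> w} \<le> \<alpha>"
    if \<tau>: "is_stopping_time F \<tau>" and Q: "Q \<in> \<Q>" for \<tau> Q
  proof -
    have "AE w in Q. \<forall>t. \<psi> t w \<le> \<psi>' t w"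
      using dom Q unfolding dominates_test_def by (simp add: AE_all_countable)
    then have "AE w in Q. stopped_test ?d \<tau> w = stopped_test \<psi>' \<tau> w"
    proof eventually_elim
      case (elim w)
      then have "(\<psi>' t w \<or> \<psi> t w) = \<psi>' t w" for t by (auto simp: le_bool_def)
      then show ?case unfolding stopped_test_def by (simp only:)
    qed
    moreover have "stopped_test ?d \<tau> \<in> Q \<rightarrow>\<^sub>M count_space UNIV"
      "stopped_test \<psi>' \<tau> \<in> Q \<rightarrow>\<^sub>M count_space UNIV"
      by (intro measurable_stopped_test[OF sets_F_le_Q[OF Q] space_Q[OF Q] \<tau>]; measurable)+
    ultimately have "measure Q {w \<in> space Q. stopped_test ?d \<tau> w}
        = measure Q {w \<in> space Q. stopped_test \<psi>' \<tau> w}"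
      by (intro measure_eq_AE) auto
    also have "\<dots> \<le> \<alpha>" using test' \<tau> Q unfolding seq_test_def by auto
    finally show ?thesis .
  qed
  moreover have "?d t \<in> F t \<rightarrow>\<^sub>M count_space UNIV" for t by measurable
  ultimately show ?thesis unfolding seq_test_def by blast
qed

lemma measure_R_accept_disj_less:
  assumes x: "seq_test F \<Q> \<alpha> x" and y: "seq_test F \<Q> \<alpha> y" and Q: "Q \<in> \<Q>"
    and pos: "measure Q {w \<in> space Q. x t w < y t w} > 0"
  shows "measure R {w \<in> space (F t). \<not> (y t w \<or> x t w)} < measure R {w \<in> space (F t). \<not> x t w}"
proof -
  interpret R: prob_space R by (rule prob_space_R)
  have [measurable]: "y t \<in> F t \<rightarrow>\<^sub>M count_space UNIV" "x t \<in> F t \<rightarrow>\<^sub>M count_space UNIV"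
    using x y unfolding seq_test_def by auto
  define A where "A = {w \<in> space (F t). x t w < y t w}"
  have A: "A \<in> sets (F t)" unfolding A_def by measurable
  then have "emeasure R A \<noteq> 0"
    using emeasure_R_neq_0[OF Q A] pos unfolding A_def by (simp add: space_F space_Q[OF Q])
  then have "0 < measure R A"
    by (simp add: R.emeasure_eq_measure zero_less_measure_iff)
  moreover have "{w \<in> space (F t). \<not> x t w} = {w \<in> space (F t). \<not> (y t w \<or> x t w)} \<union> A"
    unfolding A_def by auto
  moreover have "{w \<in> space (F t). \<not> (y t w \<or> x t w)} \<in> sets R"
    using sets_F_le_R by (rule subsetD) measurable
  moreover have "measure R ({w \<in> space (F t). \<not> (y t w \<or> x t w)} \<union> A)
      = measure R {w \<in> space (F t). \<not> (y t w \<or> x t w)} + measure R A"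
    using subsetD[OF sets_F_le_R A] calculation(3) by (intro R.finite_measure_Union) (auto simp: A_def)
  ultimately show ?thesis by simp
qed

lemma exists_admissible_test_above:
  assumes "seq_test F \<Q> \<alpha> \<psi>"
  shows "\<exists>\<psi>'. admissible_test F \<Q> \<alpha> \<psi>' \<and> dominates_test \<Q> \<psi>' \<psi>"
proof -
  interpret R: prob_space R by (rule prob_space_R)
  define \<Phi> where "\<Phi> t q = measure R {w \<in> space (F t). \<not> q t w}" for t and q :: "nat \<Rightarrow> 'a \<Rightarrow> bool"
  have "\<exists>x\<in>{q. seq_test F \<Q> \<alpha> q}. process_le \<Omega> \<psi> x \<and> \<not> (\<exists>y\<in>{q. seq_test F \<Q> \<alpha> q}.
      dominates_test \<Q> y x \<and> (\<exists>t. \<exists>Q\<in>\<Q>. measure Q {w \<in> space Q. x t w < y t w} > 0))"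
  proof (rule exists_unimprovable_below[where \<Phi>=\<Phi> and le="\<lambda>x y. process_le \<Omega> y x"])
    show "\<Phi> t x \<le> \<Phi> t y"
      if "x \<in> {q. seq_test F \<Q> \<alpha> q}" "y \<in> {q. seq_test F \<Q> \<alpha> q}" "process_le \<Omega> y x" for x y t
    proof -
      have [measurable]: "y t \<in> F t \<rightarrow>\<^sub>M count_space UNIV" using that(2) unfolding seq_test_def by auto
      have "{w \<in> space (F t). \<not> y t w} \<in> sets R" using sets_F_le_R by (rule subsetD) measurable
      then show ?thesis
        using that(3) unfolding \<Phi>_def process_le_def
        by (intro R.finite_measure_mono) (auto simp: space_F le_bool_def)
    qed
    show "\<exists>l\<in>{q. seq_test F \<Q> \<alpha> q}. \<forall>n. process_le \<Omega> (s n) l"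
      if "\<And>n. s n \<in> {q. seq_test F \<Q> \<alpha> q}" "\<And>n. process_le \<Omega> (s n) (s (Suc n))" for s
    proof (intro bexI allI)
      show "process_le \<Omega> (s n) (\<lambda>t w. \<exists>n. s n t w)" for n
        unfolding process_le_def by (auto simp: le_bool_def)
    qed (use seq_test_Ex that in blast)
    show "\<exists>z\<in>{q. seq_test F \<Q> \<alpha> q}. process_le \<Omega> x z \<and> (\<exists>t. \<Phi> t z < \<Phi> t x)"
      if x: "x \<in> {q. seq_test F \<Q> \<alpha> q}" and y: "y \<in> {q. seq_test F \<Q> \<alpha> q}"
        and better: "dominates_test \<Q> y x \<and> (\<exists>t. \<exists>Q\<in>\<Q>. measure Q {w \<in> space Q. x t w < y t w} > 0)"
      for x y
    proof -
      obtain t Q where dom: "dominates_test \<Q> y x" and Q: "Q \<in> \<Q>"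
        and pos: "measure Q {w \<in> space Q. x t w < y t w} > 0"
        using better by blast
      have "\<Phi> t (\<lambda>t w. y t w \<or> x t w) < \<Phi> t x"
        using measure_R_accept_disj_less[of \<alpha> x y Q t] x y Q pos unfolding \<Phi>_def by simp
      then show ?thesis
        using x y seq_test_disj[OF _ _ dom] unfolding process_le_def
        by (intro bexI[of _ "\<lambda>t w. y t w \<or> x t w"]) (auto simp: le_bool_def)
    qed
  qed (use assms in \<open>auto intro: process_le_trans process_le_refl simp: \<Phi>_def\<close>)
  then obtain x where "admissible_test F \<Q> \<alpha> x" "process_le \<Omega> \<psi> x"
    unfolding admissible_test_def by blast
  moreover have "dominates_test \<Q> x \<psi>"
    using \<open>process_le \<Omega> \<psi> x\<close> unfolding dominates_test_def process_le_def
    by (auto intro!: AE_I2 simp: space_Q)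
  ultimately show ?thesis by blast
qed


lemma safe_e_SUP:
  assumes safe: "\<And>n. safe_e F \<Q> (s n)" and inc: "\<And>n. process_le \<Omega> (s n) (s (Suc n))"
  shows "safe_e F \<Q> (\<lambda>t w. SUP n. s n t w)"
proof -
  define l where "l t w = (SUP n. s n t w)" for t w
  have meas[measurable]: "s n t \<in> borel_measurable (F t)" for n t
    using safe unfolding safe_e_def by auto
  have "(\<integral>\<^sup>+ w. stopped_e l \<tau> w \<partial>Q) \<le> 1" if \<tau>: "is_stopping_time F \<tau>" and Q: "Q \<in> \<Q>" for \<tau> Q
  proof (rule nat_filtration.nn_integral_stopped_e_le[OF _ sets_Q[OF Q] prob_space_Q[OF Q] _ _ \<tau>])
    show "nat_filtration \<Omega> F" by unfold_locales
    show "l t \<in> borel_measurable (F t)" for t unfolding l_def by measurable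
    \<comment> \<open>At finite stopping times the limit commutes with the integral by monotone convergence.\<close>
    show "(\<integral>\<^sup>+ w. stopped_e l \<sigma> w \<partial>Q) \<le> 1"
      if \<sigma>: "is_stopping_time F \<sigma>" and finite: "\<And>w. \<sigma> w \<noteq> \<infinity>" for \<sigma>
    proof -
      have "stopped_e l \<sigma> w = (SUP n. stopped_e (s n) \<sigma> w)" for w
        using finite[of w] unfolding stopped_e_def l_def by (cases "\<sigma> w") auto
      then have "(\<integral>\<^sup>+ w. stopped_e l \<sigma> w \<partial>Q) = (SUP n. \<integral>\<^sup>+ w. stopped_e (s n) \<sigma> w \<partial>Q)"
      proof (simp only:, intro nn_integral_monotone_convergence_SUP_AE AE_I2)
        fix n w assume "w \<in> space Q"
        then show "stopped_e (s n) \<sigma> w \<le> stopped_e (s (Suc n)) \<sigma> w"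
          using inc[of n] finite[of w] by (cases "\<sigma> w") (auto simp: stopped_e_def process_le_def space_Q[OF Q])
      qed (rule borel_measurable_stopped_e[OF sets_F_le_Q[OF Q] space_Q[OF Q] \<sigma> meas])
      also have "\<dots> \<le> 1" using safe \<sigma> Q unfolding safe_e_def by (auto intro!: SUP_least)
      finally show ?thesis .
    qed
  qed
  moreover have "l t \<in> borel_measurable (F t)" for t unfolding l_def by measurable
  ultimately show ?thesis unfolding safe_e_def l_def[symmetric] by simp
qed

lemma safe_e_max:
  assumes safe': "safe_e F \<Q> e'" and safe: "safe_e F \<Q> e" and dom: "dominates_e \<Q> e' e"
  shows "safe_e F \<Q> (\<lambda>t w. max (e' t w) (e t w))"
proof -
  let ?m = "\<lambda>t w. max (e' t w) (e t w)"
  have [measurable]: "e' t \<in> borel_measurable (F t)" "e t \<in> borel_measurable (F t)" for t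
    using safe safe' unfolding safe_e_def by auto
  have "(\<integral>\<^sup>+ w. stopped_e ?m \<tau> w \<partial>Q) \<le> 1" if \<tau>: "is_stopping_time F \<tau>" and Q: "Q \<in> \<Q>" for \<tau> Q
  proof -
    have "AE w in Q. \<forall>t. e t w \<le> e' t w"
      using dom Q unfolding dominates_e_def by (simp add: AE_all_countable)
    then have "AE w in Q. stopped_e ?m \<tau> w = stopped_e e' \<tau> w"
    proof eventually_elim
      case (elim w)
      then have "max (e' t w) (e t w) = e' t w" for t by (simp add: max_absorb1)
      then show ?case unfolding stopped_e_def by (simp only:)
    qed
    then have "(\<integral>\<^sup>+ w. stopped_e ?m \<tau> w \<partial>Q) = (\<integral>\<^sup>+ w. stopped_e e' \<tau> w \<partial>Q)"
      by (rule nn_integral_cong_AE)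
    also have "\<dots> \<le> 1" using safe' \<tau> Q unfolding safe_e_def by auto
    finally show ?thesis .
  qed
  moreover have "?m t \<in> borel_measurable (F t)" for t by measurable
  ultimately show ?thesis unfolding safe_e_def by blast
qed

lemma integrable_R_recip_safe_e: "safe_e F \<Q> q \<Longrightarrow> integrable R (\<lambda>w. recip_one_plus (q t w))"
proof (rule integrable_R_bounded[where B=1])
  assume "safe_e F \<Q> q"
  then have [measurable]: "q t \<in> borel_measurable (F t)" unfolding safe_e_def by auto
  show "(\<lambda>w. recip_one_plus (q t w)) \<in> borel_measurable (F t)" by measurable
qed (use recip_one_plus_bounds in auto)

lemma integral_R_recip_max_less:
  assumes x: "safe_e F \<Q> x" and y: "safe_e F \<Q> y" and Q: "Q \<in> \<Q>"
    and pos: "measure Q {w \<in> space Q. x t w < y t w} > 0"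
  shows "(\<integral>w. recip_one_plus (max (y t w) (x t w)) \<partial>R) < (\<integral>w. recip_one_plus (x t w) \<partial>R)"
proof -
  interpret R: prob_space R by (rule prob_space_R)
  have [measurable]: "y t \<in> borel_measurable (F t)" "x t \<in> borel_measurable (F t)"
    using x y unfolding safe_e_def by auto
  define A where "A = {w \<in> space (F t). x t w < y t w}"
  have A: "A \<in> sets (F t)" unfolding A_def by measurable
  then have "emeasure R A \<noteq> 0"
    using emeasure_R_neq_0[OF Q A] pos unfolding A_def by (simp add: space_F space_Q[OF Q])
  moreover have "A \<in> sets R" using A sets_F_le_R by blast
  moreover have "integrable R (\<lambda>w. recip_one_plus (max (y t w) (x t w)))"
    by (rule integrable_R_bounded[where B=1 and t=t]) (auto simp: recip_one_plus_bounds)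
  ultimately show ?thesis
    using integrable_R_recip_safe_e[OF x]
    by (intro R.integral_less_AE[where A=A])
      (auto simp: A_def intro!: recip_one_plus_antimono dest!: recip_one_plus_strict_antimono)
qed

lemma exists_admissible_e_above:
  assumes "safe_e F \<Q> e"
  shows "\<exists>e'. admissible_e F \<Q> e' \<and> dominates_e \<Q> e' e"
proof -
  define \<Phi> where "\<Phi> t q = (\<integral>w. recip_one_plus (q t w) \<partial>R)" for t and q :: "nat \<Rightarrow> 'a \<Rightarrow> ennreal"
  have "\<exists>x\<in>{q. safe_e F \<Q> q}. process_le \<Omega> e x \<and> \<not> (\<exists>y\<in>{q. safe_e F \<Q> q}.
      dominates_e \<Q> y x \<and> (\<exists>t. \<exists>Q\<in>\<Q>. measure Q {w \<in> space Q. x t w < y t w} > 0))"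
  proof (rule exists_unimprovable_below[where \<Phi>=\<Phi> and le="\<lambda>x y. process_le \<Omega> y x"])
    show "\<Phi> t x \<le> \<Phi> t y"
      if "x \<in> {q. safe_e F \<Q> q}" "y \<in> {q. safe_e F \<Q> q}" "process_le \<Omega> y x" for x y t
      using that integrable_R_recip_safe_e unfolding \<Phi>_def process_le_def
      by (intro integral_mono recip_one_plus_antimono) (auto simp: space_R)
    show "0 \<le> \<Phi> t x" for x t
      unfolding \<Phi>_def by (intro integral_nonneg_AE AE_I2) (simp add: recip_one_plus_bounds)
    show "\<exists>l\<in>{q. safe_e F \<Q> q}. \<forall>n. process_le \<Omega> (s n) l"
      if "\<And>n. s n \<in> {q. safe_e F \<Q> q}" "\<And>n. process_le \<Omega> (s n) (s (Suc n))" for s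
    proof (intro bexI allI)
      show "process_le \<Omega> (s n) (\<lambda>t w. SUP n. s n t w)" for n
        unfolding process_le_def by (auto intro: SUP_upper)
    qed (use safe_e_SUP that in blast)
    show "\<exists>z\<in>{q. safe_e F \<Q> q}. process_le \<Omega> x z \<and> (\<exists>t. \<Phi> t z < \<Phi> t x)"
      if x: "x \<in> {q. safe_e F \<Q> q}" and y: "y \<in> {q. safe_e F \<Q> q}"
        and better: "dominates_e \<Q> y x \<and> (\<exists>t. \<exists>Q\<in>\<Q>. measure Q {w \<in> space Q. x t w < y t w} > 0)"
      for x y
    proof -
      obtain t Q where dom: "dominates_e \<Q> y x" and Q: "Q \<in> \<Q>"
        and pos: "measure Q {w \<in> space Q. x t w < y t w} > 0"
        using better by blast
      have "\<Phi> t (\<lambda>t w. max (y t w) (x t w)) < \<Phi> t x"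
        using integral_R_recip_max_less[of x y Q t] x y Q pos unfolding \<Phi>_def by simp
      then show ?thesis
        using x y safe_e_max[OF _ _ dom] unfolding process_le_def
        by (intro bexI[of _ "\<lambda>t w. max (y t w) (x t w)"]) auto
    qed
  qed (use assms in \<open>auto intro: process_le_trans process_le_refl\<close>)
  then obtain x where "admissible_e F \<Q> x" "process_le \<Omega> e x"
    unfolding admissible_e_def by blast
  moreover have "dominates_e \<Q> x e"
    using \<open>process_le \<Omega> e x\<close> unfolding dominates_e_def process_le_def
    by (auto intro!: AE_I2 simp: space_Q)
  ultimately show ?thesis by blast
qed

end


lemma space_Fil: "space (Fil \<Omega> S U X t) = \<Omega>"
  unfolding Fil_def by (rule space_measure_of_conv)

lemma sets_Fil_mono:
  assumes "s \<le> t"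
  shows "sets (Fil \<Omega> S U X s) \<subseteq> sets (Fil \<Omega> S U X t)"
proof -
  have gen: "{U -` B \<inter> \<Omega> | B. B \<in> sets borel} \<union> (\<Union>s\<in>{1..t}. {X s -` A \<inter> \<Omega> | A. A \<in> sets S})
      \<subseteq> Pow \<Omega>" for t
    by blast
  show ?thesis
    unfolding Fil_def sets_measure_of[OF gen]
    by (intro sigma_sets_mono' Un_mono order_refl UN_mono) (use assms in auto)
qed

lemma sets_Finf: "sets (Finf \<Omega> S U X) = sigma_sets \<Omega> (\<Union>t. sets (Fil \<Omega> S U X t))"
  unfolding Finf_def using sets.sets_into_space[of _ "Fil \<Omega> S U X _"]
  by (intro sets_measure_of) (auto simp: space_Fil)

theorem proposition2:
  fixes \<Omega> :: "'w set" and S :: "'x measure" and U :: "'w \<Rightarrow> real"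
    and X :: "nat \<Rightarrow> 'w \<Rightarrow> 'x" and \<Q> :: "'w measure set" and \<alpha> :: real
  assumes X_space: "\<And>s. s \<ge> 1 \<Longrightarrow> X s \<in> \<Omega> \<rightarrow> space S"
    and Q_prob: "\<And>Q. Q \<in> \<Q> \<Longrightarrow> prob_space Q \<and> sets Q = sets (Finf \<Omega> S U X)"
    and U_uniform: "\<And>Q. Q \<in> \<Q> \<Longrightarrow> distr Q lborel U = uniform_measure lborel {0..1}"
    and U_indep: "\<And>Q. Q \<in> \<Q> \<Longrightarrow>
        prob_space.indep_set Q
          (sigma_sets \<Omega> {U -` B \<inter> \<Omega> | B. B \<in> sets borel})
          (sigma_sets \<Omega> (\<Union>s\<in>{1..}. {X s -` A \<inter> \<Omega> | A. A \<in> sets S}))"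
    and loc_dom: "locally_dominated (Fil \<Omega> S U X) (Finf \<Omega> S U X) \<Q>"
  shows "(\<forall>p. valid_p (Fil \<Omega> S U X) \<Q> p \<longrightarrow>
            (\<exists>p'. admissible_p (Fil \<Omega> S U X) \<Q> p' \<and> dominates_p \<Q> p' p)) \<and>
         (\<forall>e. safe_e (Fil \<Omega> S U X) \<Q> e \<longrightarrow>
            (\<exists>e'. admissible_e (Fil \<Omega> S U X) \<Q> e' \<and> dominates_e \<Q> e' e)) \<and>
         (\<forall>\<psi>. seq_test (Fil \<Omega> S U X) \<Q> \<alpha> \<psi> \<longrightarrow>
            (\<exists>\<psi>'. admissible_test (Fil \<Omega> S U X) \<Q> \<alpha> \<psi>' \<and> dominates_test \<Q> \<psi>' \<psi>))"
proof -
  obtain R where "prob_space R" "sets R = sets (Finf \<Omega> S U X)"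
    and null: "\<forall>t. \<forall>Q\<in>\<Q>. \<forall>A\<in>sets (Fil \<Omega> S U X t). emeasure R A = 0 \<longrightarrow> emeasure Q A = 0"
    using loc_dom unfolding locally_dominated_def by blast
  then have "dominated_family \<Omega> (Fil \<Omega> S U X) \<Q> R"
    unfolding dominated_family_def dominated_family_axioms_def nat_filtration_def filtration_def
    using Q_prob null by (simp add: space_Fil sets_Fil_mono sets_Finf)
  then interpret dominated_family \<Omega> "Fil \<Omega> S U X" \<Q> R .
  show ?thesis
    using exists_admissible_p_below exists_admissible_e_above exists_admissible_test_above
    by (intro conjI allI impI)
qed

end
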